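(* Let $P=(L_1,\dots,L_7)$ be a heptagon with smooth adjoint quartic $C$ and associated theta characteristic $\eta$. Then the following linear equivalences of divisors on $C$ hold: \begin{align*} \eta+p_{13}-p_{46} &\sim p_{47}+p_{57}, & \eta+p_{46}-p_{13} &\sim p_{37}+p_{27},\\ \eta+p_{46}-p_{27} &\sim p_{37}+p_{13}, & \eta+p_{27}-p_{46} &\sim p_{36}+p_{35},\\ \eta+p_{27}-p_{35} &\sim p_{36}+p_{46}, & \eta+p_{35}-p_{27} &\sim p_{26}+p_{16},\\ \eta+p_{35}-p_{16} &\sim p_{26}+p_{27}, & \eta+p_{16}-p_{35} &\sim p_{25}+p_{24},\\ \eta+p_{16}-p_{24} &\sim p_{25}+p_{35}, & \eta+p_{24}-p_{16} &\sim p_{15}+p_{57},\\ \eta+p_{24}-p_{57} &\sim p_{15}+p_{16}, & \eta+p_{57}-p_{24} &\sim p_{14}+p_{13},\\ \eta+p_{57}-p_{13} &\sim p_{14}+p_{24}, & \eta+p_{13}-p_{57} &\sim p_{47}+p_{46}. \end{align*}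
   Context: Work over $\mathbb{C}$. A heptagon is an ordered $7$-tuple $(L_1,\dots,L_7)$ of distinct lines in $\mathbb{P}^2$, no three passing through a common point. Write $p_{ij}=L_i\cap L_j$. The residual arrangement $\mathcal{R}(P)$ is the set of the $14$ points $p_{ij}$ with $i,j$ not consecutive modulo $7$; the adjoint quartic is the unique plane quartic $C$ through $\mathcal{R}(P)$. If $C$ is smooth, the associated theta characteristic is $\eta:=\sum_{p\in\mathcal{R}(P)}p-3H$ (a divisor class on $C$ with $2\eta\sim H$), where $H$ is the class of a line. *)

theory Defs
  imports "HOL-Complex_Analysis.Complex_Analysis"
begin

text \<open>Vectors in C^3 (homogeneous coordinates of points of P^2, or coefficient
vectors of lines).\<close>
type_synonym cvec = "complex \<times> complex \<times> complex"

definition c1 :: "cvec \<Rightarrow> complex" where "c1 v = fst v"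
definition c2 :: "cvec \<Rightarrow> complex" where "c2 v = fst (snd v)"
definition c3 :: "cvec \<Rightarrow> complex" where "c3 v = snd (snd v)"

definition zvec :: cvec where "zvec = (0, 0, 0)"

definition smul :: "complex \<Rightarrow> cvec \<Rightarrow> cvec" where
  "smul c v = (c * c1 v, c * c2 v, c * c3 v)"

definition dot :: "cvec \<Rightarrow> cvec \<Rightarrow> complex" where
  "dot u v = c1 u * c1 v + c2 u * c2 v + c3 u * c3 v"

definition cross :: "cvec \<Rightarrow> cvec \<Rightarrow> cvec" where
  "cross u v = (c2 u * c3 v - c3 u * c2 v, c3 u * c1 v - c1 u * c3 v, c1 u * c2 v - c2 u * c1 v)"

definition det3 :: "cvec \<Rightarrow> cvec \<Rightarrow> cvec \<Rightarrow> complex" where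
  "det3 u v w = dot u (cross v w)"

definition proj_eq :: "cvec \<Rightarrow> cvec \<Rightarrow> bool" where
  "proj_eq u v \<longleftrightarrow> u \<noteq> zvec \<and> v \<noteq> zvec \<and> (\<exists>c. v = smul c u)"

text \<open>Heptagon: L i (i = 1..7) is the coefficient vector of the line
  L_i = {x. dot (L i) x = 0}; lines distinct, no three concurrent.\<close>
definition heptagon :: "(nat \<Rightarrow> cvec) \<Rightarrow> bool" where
  "heptagon L \<longleftrightarrow>
     (\<forall>i\<in>{1..7}. L i \<noteq> zvec) \<and>
     (\<forall>i\<in>{1..7}. \<forall>j\<in>{1..7}. i \<noteq> j \<longrightarrow> cross (L i) (L j) \<noteq> zvec) \<and>
     (\<forall>i\<in>{1..7}. \<forall>j\<in>{1..7}. \<forall>k\<in>{1..7}. i \<noteq> j \<and> j \<noteq> k \<and> i \<noteq> k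
          \<longrightarrow> det3 (L i) (L j) (L k) \<noteq> 0)"

text \<open>A representative of the intersection point p_ij = L_i \<inter> L_j.\<close>
definition pt :: "(nat \<Rightarrow> cvec) \<Rightarrow> nat \<Rightarrow> nat \<Rightarrow> cvec" where
  "pt L i j = cross (L i) (L j)"

definition res_pairs :: "(nat \<times> nat) set" where
  "res_pairs = {(i, j). 1 \<le> i \<and> i < j \<and> j \<le> 7 \<and> j - i \<noteq> 1 \<and> j - i \<noteq> 6}"

text \<open>Ternary forms, given by coefficient functions on exponent triples.\<close>
type_synonym form = "nat \<times> nat \<times> nat \<Rightarrow> complex"

definition monoms :: "nat \<Rightarrow> (nat \<times> nat \<times> nat) set" where
  "monoms d = {m. fst m + fst (snd m) + snd (snd m) = d}"

definition hom_form :: "nat \<Rightarrow> form \<Rightarrow> bool" where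
  "hom_form d F \<longleftrightarrow> (\<forall>m. F m \<noteq> 0 \<longrightarrow> m \<in> monoms d)"

definition feval :: "nat \<Rightarrow> form \<Rightarrow> cvec \<Rightarrow> complex" where
  "feval d F v = (\<Sum>m\<in>monoms d. F m * c1 v ^ fst m * c2 v ^ fst (snd m) * c3 v ^ snd (snd m))"

definition dX :: "form \<Rightarrow> form" where
  "dX F = (\<lambda>(a, b, c). of_nat (a + 1) * F (a + 1, b, c))"
definition dY :: "form \<Rightarrow> form" where
  "dY F = (\<lambda>(a, b, c). of_nat (b + 1) * F (a, b + 1, c))"
definition dZ :: "form \<Rightarrow> form" where
  "dZ F = (\<lambda>(a, b, c). of_nat (c + 1) * F (a, b, c + 1))"

definition smooth_curve :: "nat \<Rightarrow> form \<Rightarrow> bool" where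
  "smooth_curve d F \<longleftrightarrow> hom_form d F \<and> F \<noteq> (\<lambda>_. 0) \<and>
     (\<forall>v. v \<noteq> zvec \<and> feval d F v = 0 \<longrightarrow>
        \<not> (feval (d - 1) (dX F) v = 0 \<and> feval (d - 1) (dY F) v = 0 \<and> feval (d - 1) (dZ F) v = 0))"

definition adjoint_quartic :: "(nat \<Rightarrow> cvec) \<Rightarrow> form \<Rightarrow> bool" where
  "adjoint_quartic L C \<longleftrightarrow> hom_form 4 C \<and> C \<noteq> (\<lambda>_. 0) \<and>
     (\<forall>(i, j)\<in>res_pairs. feval 4 C (pt L i j) = 0) \<and>
     (\<forall>C'. hom_form 4 C' \<and> (\<forall>(i, j)\<in>res_pairs. feval 4 C' (pt L i j) = 0)
           \<longrightarrow> (\<exists>c. C' = (\<lambda>m. c * C m)))"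

text \<open>A local holomorphic parametrization of the curve F = 0 near p, with nonzero
  derivative as a map into P^2 (a local chart of the smooth curve).\<close>
definition local_param :: "nat \<Rightarrow> form \<Rightarrow> cvec \<Rightarrow> (complex \<Rightarrow> cvec) \<Rightarrow> bool" where
  "local_param d F p \<gamma> \<longleftrightarrow> (\<exists>r>0.
     (\<lambda>t. c1 (\<gamma> t)) holomorphic_on ball 0 r \<and>
     (\<lambda>t. c2 (\<gamma> t)) holomorphic_on ball 0 r \<and>
     (\<lambda>t. c3 (\<gamma> t)) holomorphic_on ball 0 r \<and>
     \<gamma> 0 = p \<and>
     (\<forall>t\<in>ball 0 r. \<gamma> t \<noteq> zvec \<and> feval d F (\<gamma> t) = 0) \<and>
     cross p (deriv (\<lambda>t. c1 (\<gamma> t)) 0, deriv (\<lambda>t. c2 (\<gamma> t)) 0, deriv (\<lambda>t. c3 (\<gamma> t)) 0) \<noteq> zvec)"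

definition curve_ord :: "nat \<Rightarrow> form \<Rightarrow> nat \<Rightarrow> form \<Rightarrow> cvec \<Rightarrow> int" where
  "curve_ord d F e G p =
     (THE n. \<forall>\<gamma>. local_param d F p \<gamma> \<longrightarrow> zorder (\<lambda>t. feval e G (\<gamma> t)) 0 = n)"

text \<open>Divisors on the curve: scale-invariant functions cvec => int
  (value at a representative of a point).\<close>
type_synonym divisor = "cvec \<Rightarrow> int"

definition divC :: "nat \<Rightarrow> form \<Rightarrow> nat \<Rightarrow> form \<Rightarrow> divisor" where
  "divC d F e G = (\<lambda>v. if v \<noteq> zvec \<and> feval d F v = 0 then curve_ord d F e G v else 0)"

definition pt_div :: "cvec \<Rightarrow> divisor" where
  "pt_div p = (\<lambda>v. if proj_eq p v then 1 else 0)"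

text \<open>Linear equivalence on the curve: D - D' is the divisor of a rational function
  G/H, with G, H forms of the same degree not vanishing identically on the curve.\<close>
definition lin_equiv :: "nat \<Rightarrow> form \<Rightarrow> divisor \<Rightarrow> divisor \<Rightarrow> bool" where
  "lin_equiv d F D D' \<longleftrightarrow> (\<exists>e G H. hom_form e G \<and> hom_form e H \<and>
     (\<exists>v. v \<noteq> zvec \<and> feval d F v = 0 \<and> feval e G v \<noteq> 0) \<and>
     (\<exists>v. v \<noteq> zvec \<and> feval d F v = 0 \<and> feval e H v \<noteq> 0) \<and>
     (\<forall>v. D v - D' v = divC d F e G v - divC d F e H v))"

text \<open>The linear form x (first coordinate); its divisor represents the class H.\<close>
definition xform :: form where
  "xform = (\<lambda>m. if m = (1, 0, 0) then 1 else 0)"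

definition eta :: "(nat \<Rightarrow> cvec) \<Rightarrow> form \<Rightarrow> divisor" where
  "eta L C = (\<lambda>v. (\<Sum>(i, j)\<in>res_pairs. pt_div (pt L i j) v) - 3 * divC 4 C 1 xform v)"

definition eta_rel :: "(nat \<Rightarrow> cvec) \<Rightarrow> form \<Rightarrow> nat \<times> nat \<Rightarrow> nat \<times> nat \<Rightarrow> nat \<times> nat \<Rightarrow> nat \<times> nat \<Rightarrow> bool" where
  "eta_rel L C a b c e \<longleftrightarrow> lin_equiv 4 C
     (\<lambda>v. eta L C v + pt_div (pt L (fst a) (snd a)) v - pt_div (pt L (fst b) (snd b)) v)
     (\<lambda>v. pt_div (pt L (fst c) (snd c)) v + pt_div (pt L (fst e) (snd e)) v)"

end

theory Submission
  imports Defs "HOL-Computational_Algebra.Fundamental_Theorem_Algebra"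
begin

text \<open>
  Each side \<open>L\<^sub>k\<close> of the heptagon contains exactly four residual points, the intersections
  with the four non-adjacent sides, and they lie on the adjoint quartic \<open>C\<close>. A line meeting a
  smooth quartic in four distinct points meets it nowhere else and transversally, so \<open>L\<^sub>k\<close>
  cuts out on \<open>C\<close> the sum of its four residual points. Hence the cubic \<open>L\<^sub>r L\<^sub>s L\<^sub>t\<close>
  cuts out \<open>\<Sum> |{i, j} \<inter> {r, s, t}| p\<^sub>i\<^sub>j\<close>, while \<open>x\<^sup>3\<close> cuts out \<open>3H\<close>; each of the fourteen
  relations comes from a triple of sides for which these multiplicities match those of
  \<open>\<eta> + p\<^sub>a - p\<^sub>b - p\<^sub>c - p\<^sub>e + 3H\<close>, a finite check.

  Orders of vanishing are computed in a holomorphic chart of \<open>C\<close> given by the implicit function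
  theorem; any local parametrisation differs from the chart by a change of parameter with nonzero
  derivative and a nonvanishing scalar factor, so the order does not depend on it.
\<close>

section \<open>Vectors in \<open>\<complex>\<^sup>3\<close>\<close>

lemma cvec_components [simp]: "c1 (a, b, c) = a" "c2 (a, b, c) = b" "c3 (a, b, c) = c"
  by (simp_all add: c1_def c2_def c3_def)

lemma cvec_eta [simp]: "(c1 v, c2 v, c3 v) = v"
  by (simp add: c1_def c2_def c3_def)

definition lincomb :: "complex \<Rightarrow> cvec \<Rightarrow> complex \<Rightarrow> cvec \<Rightarrow> cvec" where
  "lincomb a u b v = (a * c1 u + b * c1 v, a * c2 u + b * c2 v, a * c3 u + b * c3 v)"

lemma smul_eq_zvec_iff: "smul c v = zvec \<longleftrightarrow> c = 0 \<or> v = zvec"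
  by (cases v) (auto simp: smul_def zvec_def)

lemma dot_commute: "dot u v = dot v u"
  by (simp add: dot_def algebra_simps)

lemma dot_smul_right: "dot l (smul c v) = c * dot l v"
  by (simp add: dot_def smul_def algebra_simps)

lemma dot_lincomb_right: "dot l (lincomb a u b v) = a * dot l u + b * dot l v"
  by (simp add: dot_def lincomb_def algebra_simps)

lemma dot_cross_left: "dot x (cross x y) = 0"
  by (simp add: dot_def cross_def algebra_simps)

lemma dot_cross_right: "dot y (cross x y) = 0"
  by (simp add: dot_def cross_def algebra_simps)

lemma cross_smul_left: "cross (smul a p) q = smul a (cross p q)"
  by (simp add: cross_def smul_def algebra_simps)

lemma cross_self: "cross p p = zvec"
  by (simp add: cross_def zvec_def algebra_simps)

lemma cross_commute: "cross q p = smul (-1) (cross p q)"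
  by (simp add: cross_def smul_def algebra_simps)

lemma cross_eq_zvec_commute: "cross p q = zvec \<longleftrightarrow> cross q p = zvec"
  by (simp add: cross_commute[of p q] smul_eq_zvec_iff)

lemma cross_smul_self: "cross p (smul c p) = zvec"
  by (simp add: cross_def smul_def zvec_def algebra_simps)

lemma cross_cross_right: "cross a (cross b c) = lincomb (dot a c) b (- dot a b) c"
  by (simp add: cross_def dot_def lincomb_def algebra_simps)

lemma cross_cross_common: "cross (cross a b) (cross a c) = smul (det3 a b c) a"
  by (simp add: cross_def det3_def dot_def smul_def algebra_simps)

lemma det3_as_dot:
  "det3 v u w = dot v (cross u w)" "det3 p v w = dot v (cross w p)" "det3 p u v = dot v (cross p u)"
  by (simp_all add: det3_def dot_def cross_def algebra_simps)

lemma det3_repeated: "det3 p p w = 0" "det3 p u p = 0"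
  by (simp_all add: det3_def dot_def cross_def algebra_simps)

lemma det3_smul_left: "det3 (smul c x) u w = c * det3 x u w"
  by (simp add: det3_def dot_def smul_def algebra_simps)

lemma det3_smul_middle: "det3 p (smul c x) w = c * det3 p x w"
  by (simp add: det3_def dot_def cross_def smul_def algebra_simps)

lemma cramer_rule:
  "det3 p u w * c1 y = det3 y u w * c1 p + det3 p y w * c1 u + det3 p u y * c1 w"
  "det3 p u w * c2 y = det3 y u w * c2 p + det3 p y w * c2 u + det3 p u y * c2 w"
  "det3 p u w * c3 y = det3 y u w * c3 p + det3 p y w * c3 u + det3 p u y * c3 w"
  by (simp_all add: det3_def dot_def cross_def algebra_simps)

lemma cross_eq_zvec_imp_smul:
  assumes "p \<noteq> zvec" "cross p v = zvec"
  shows "\<exists>c. v = smul c p"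
proof -
  obtain p1 p2 p3 where p: "p = (p1, p2, p3)" by (cases p)
  obtain v1 v2 v3 where v: "v = (v1, v2, v3)" by (cases v)
  have h: "p2 * v3 = p3 * v2" "p3 * v1 = p1 * v3" "p1 * v2 = p2 * v1"
    using assms(2) by (auto simp: p v cross_def zvec_def)
  consider "p1 \<noteq> 0" | "p2 \<noteq> 0" | "p3 \<noteq> 0" using assms(1) by (auto simp: p zvec_def)
  then show ?thesis
  proof cases
    case 1 then have "v = smul (v1 / p1) p" using h by (simp add: p v smul_def field_simps)
    then show ?thesis by blast
  next
    case 2 then have "v = smul (v2 / p2) p" using h by (simp add: p v smul_def field_simps)
    then show ?thesis by blast
  next
    case 3 then have "v = smul (v3 / p3) p" using h by (simp add: p v smul_def field_simps)
    then show ?thesis by blast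
  qed
qed

lemma det3_eq_0_imp_lincomb:
  assumes uv: "cross u v \<noteq> zvec" and y: "det3 y u v = 0"
  shows "\<exists>a b. y = lincomb a u b v"
proof -
  obtain u1 u2 u3 where u: "u = (u1, u2, u3)" by (cases u)
  obtain v1 v2 v3 where v: "v = (v1, v2, v3)" by (cases v)
  obtain y1 y2 y3 where yy: "y = (y1, y2, y3)" by (cases y)
  have h: "y1 * (u2 * v3 - u3 * v2) + y2 * (u3 * v1 - u1 * v3) + y3 * (u1 * v2 - u2 * v1) = 0"
    using y by (simp add: u v yy det3_def dot_def cross_def)
  consider "u2 * v3 - u3 * v2 \<noteq> 0" | "u3 * v1 - u1 * v3 \<noteq> 0" | "u1 * v2 - u2 * v1 \<noteq> 0"
    using uv by (auto simp: u v cross_def zvec_def)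
  then show ?thesis
  proof cases
    case 1
    let ?n = "u2 * v3 - u3 * v2"
    have "?n * y1 = (y2 * v3 - y3 * v2) * u1 + (u2 * y3 - u3 * y2) * v1" using h by algebra
    moreover have "?n * y2 = (y2 * v3 - y3 * v2) * u2 + (u2 * y3 - u3 * y2) * v2" by algebra
    moreover have "?n * y3 = (y2 * v3 - y3 * v2) * u3 + (u2 * y3 - u3 * y2) * v3" by algebra
    ultimately have "y = lincomb ((y2 * v3 - y3 * v2) / ?n) u ((u2 * y3 - u3 * y2) / ?n) v"
      using 1 unfolding lincomb_def u v yy by (simp add: divide_simps) (metis mult.commute)
    then show ?thesis by blast
  next
    case 2
    let ?n = "u3 * v1 - u1 * v3"
    have "?n * y1 = (y3 * v1 - y1 * v3) * u1 + (u3 * y1 - u1 * y3) * v1" by algebra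
    moreover have "?n * y2 = (y3 * v1 - y1 * v3) * u2 + (u3 * y1 - u1 * y3) * v2" using h by algebra
    moreover have "?n * y3 = (y3 * v1 - y1 * v3) * u3 + (u3 * y1 - u1 * y3) * v3" by algebra
    ultimately have "y = lincomb ((y3 * v1 - y1 * v3) / ?n) u ((u3 * y1 - u1 * y3) / ?n) v"
      using 2 unfolding lincomb_def u v yy by (simp add: divide_simps) (metis mult.commute)
    then show ?thesis by blast
  next
    case 3
    let ?n = "u1 * v2 - u2 * v1"
    have "?n * y1 = (y1 * v2 - y2 * v1) * u1 + (u1 * y2 - u2 * y1) * v1" by algebra
    moreover have "?n * y2 = (y1 * v2 - y2 * v1) * u2 + (u1 * y2 - u2 * y1) * v2" by algebra
    moreover have "?n * y3 = (y1 * v2 - y2 * v1) * u3 + (u1 * y2 - u2 * y1) * v3" using h by algebra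
    ultimately have "y = lincomb ((y1 * v2 - y2 * v1) / ?n) u ((u1 * y2 - u2 * y1) / ?n) v"
      using 3 unfolding lincomb_def u v yy by (simp add: divide_simps) (metis mult.commute)
    then show ?thesis by blast
  qed
qed

lemma orthogonal_to_both_imp_smul_cross:
  assumes ab: "cross a b \<noteq> zvec" and "dot y a = 0" "dot y b = 0"
  shows "\<exists>c. y = smul c (cross a b)"
proof -
  obtain a1 a2 a3 where a: "a = (a1, a2, a3)" by (cases a)
  obtain b1 b2 b3 where b: "b = (b1, b2, b3)" by (cases b)
  obtain y1 y2 y3 where yy: "y = (y1, y2, y3)" by (cases y)
  have h1: "y1 * a1 + y2 * a2 + y3 * a3 = 0" and h2: "y1 * b1 + y2 * b2 + y3 * b3 = 0"
    using assms by (simp_all add: a b yy dot_def)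
  define n1 where "n1 = a2 * b3 - a3 * b2"
  define n2 where "n2 = a3 * b1 - a1 * b3"
  define n3 where "n3 = a1 * b2 - a2 * b1"
  have cr: "cross a b = (n1, n2, n3)" by (simp add: a b cross_def n1_def n2_def n3_def)
  have e12: "n1 * y2 = n2 * y1" using h1 h2 unfolding n1_def n2_def by algebra
  have e13: "n1 * y3 = n3 * y1" using h1 h2 unfolding n1_def n3_def by algebra
  have e23: "n2 * y3 = n3 * y2" using h1 h2 unfolding n2_def n3_def by algebra
  consider "n1 \<noteq> 0" | "n2 \<noteq> 0" | "n3 \<noteq> 0" using ab by (auto simp: cr zvec_def)
  then show ?thesis
  proof cases
    case 1 then have "y = smul (y1 / n1) (cross a b)"
      using e12 e13 by (simp add: cr smul_def yy field_simps)
    then show ?thesis by blast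
  next
    case 2 then have "y = smul (y2 / n2) (cross a b)"
      using e12 e23 by (simp add: cr smul_def yy field_simps)
    then show ?thesis by blast
  next
    case 3 then have "y = smul (y3 / n3) (cross a b)"
      using e13 e23 by (simp add: cr smul_def yy field_simps)
    then show ?thesis by blast
  qed
qed

lemma det3_eq_0_if_orthogonal:
  assumes "l \<noteq> zvec" "dot l p = 0" "dot l v = 0" "dot l b = 0"
  shows "det3 p v b = 0"
proof -
  obtain p1 p2 p3 where p: "p = (p1, p2, p3)" by (cases p)
  obtain v1 v2 v3 where v: "v = (v1, v2, v3)" by (cases v)
  obtain b1 b2 b3 where b: "b = (b1, b2, b3)" by (cases b)
  obtain l1 l2 l3 where l: "l = (l1, l2, l3)" by (cases l)
  define D where "D = det3 p v b"
  have h: "l1 * p1 + l2 * p2 + l3 * p3 = 0" "l1 * v1 + l2 * v2 + l3 * v3 = 0"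
    "l1 * b1 + l2 * b2 + l3 * b3 = 0"
    using assms by (simp_all add: p v b l dot_def)
  have D: "D = p1 * (v2 * b3 - v3 * b2) + p2 * (v3 * b1 - v1 * b3) + p3 * (v1 * b2 - v2 * b1)"
    by (simp add: D_def det3_def dot_def cross_def p v b)
  have "D * l1 = 0" "D * l2 = 0" "D * l3 = 0" using h unfolding D by algebra+
  with assms(1) show ?thesis unfolding D_def[symmetric] by (auto simp: l zvec_def)
qed

lemma lincomb_neq_zvec:
  assumes "cross a b \<noteq> zvec" "s \<noteq> 0 \<or> t \<noteq> 0"
  shows "lincomb s a t b \<noteq> zvec"
proof
  assume h: "lincomb s a t b = zvec"
  have "smul t (cross a b) = cross a (lincomb s a t b)"
    by (simp add: cross_def lincomb_def smul_def algebra_simps)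
  also have "\<dots> = zvec" unfolding h by (simp add: cross_def zvec_def)
  finally have 1: "smul t (cross a b) = zvec" .
  have "smul (- s) (cross a b) = cross b (lincomb s a t b)"
    by (simp add: cross_def lincomb_def smul_def algebra_simps)
  also have "\<dots> = zvec" unfolding h by (simp add: cross_def zvec_def)
  finally have 2: "smul (- s) (cross a b) = zvec" .
  from 1 2 assms show False by (auto simp: smul_eq_zvec_iff)
qed

definition cvec_comp :: "nat \<Rightarrow> cvec \<Rightarrow> complex" where
  "cvec_comp k v = (if k = 1 then c1 v else if k = 2 then c2 v else c3 v)"

definition unit_cvec :: "nat \<Rightarrow> cvec" where
  "unit_cvec k = (if k = 1 then (1, 0, 0) else if k = 2 then (0, 1, 0) else (0, 0, 1))"

lemma dot_unit_cvec: "dot v (unit_cvec k) = cvec_comp k v"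
  by (simp add: unit_cvec_def cvec_comp_def dot_def)

lemma cvec_comp_smul: "cvec_comp k (smul c v) = c * cvec_comp k v"
  by (simp add: cvec_comp_def smul_def)

lemma cvec_comp_nonzero: "v \<noteq> zvec \<Longrightarrow> \<exists>k. cvec_comp k v \<noteq> 0"
  by (cases v) (auto simp: cvec_comp_def zvec_def intro: exI[of _ 1] exI[of _ 2] exI[of _ 3])

section \<open>Ternary forms\<close>

definition monom_val :: "cvec \<Rightarrow> nat \<times> nat \<times> nat \<Rightarrow> complex" where
  "monom_val v m = c1 v ^ fst m * c2 v ^ fst (snd m) * c3 v ^ snd (snd m)"

lemma feval_eq_sum_monom_val: "feval d F v = (\<Sum>m\<in>monoms d. F m * monom_val v m)"
  by (simp add: feval_def monom_val_def mult.assoc)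

lemma finite_monoms [simp]: "finite (monoms d)"
proof (rule finite_subset)
  show "monoms d \<subseteq> {..d} \<times> {..d} \<times> {..d}" by (auto simp: monoms_def)
qed auto

lemma feval_smul: "feval d F (smul s v) = s ^ d * feval d F v"
proof -
  have "feval d F (smul s v) = (\<Sum>m\<in>monoms d. s ^ d * (F m * monom_val v m))"
    unfolding feval_eq_sum_monom_val
  proof (rule sum.cong[OF refl])
    fix m assume "m \<in> monoms d"
    then have "s ^ d = s ^ fst m * s ^ fst (snd m) * s ^ snd (snd m)"
      by (simp add: monoms_def flip: power_add)
    then show "F m * monom_val (smul s v) m = s ^ d * (F m * monom_val v m)"
      by (simp add: monom_val_def smul_def power_mult_distrib)
  qed
  also have "\<dots> = s ^ d * feval d F v" by (simp add: feval_eq_sum_monom_val sum_distrib_left)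
  finally show ?thesis .
qed

lemma continuous_on_feval [continuous_intros]:
  assumes "continuous_on S x" "continuous_on S y" "continuous_on S z"
  shows "continuous_on S (\<lambda>t. feval d F (x t, y t, z t))"
  unfolding feval_def cvec_components by (intro continuous_intros assms)

lemma holomorphic_on_feval [holomorphic_intros]:
  assumes "x holomorphic_on S" "y holomorphic_on S" "z holomorphic_on S"
  shows "(\<lambda>t. feval d F (x t, y t, z t)) holomorphic_on S"
  unfolding feval_def cvec_components by (intro holomorphic_intros assms)

text \<open>Termwise differentiation: raising one exponent by one identifies \<open>monoms (d - 1)\<close> with the
  monomials of degree \<open>d\<close> that contain the variable.\<close>

lemma feval_dX_eq_sum:
  assumes "d \<ge> 1"
  shows "feval (d - 1) (dX F) (X, Y, Z) =
    (\<Sum>m\<in>monoms d. F m * (of_nat (fst m) * X ^ (fst m - 1) * Y ^ fst (snd m) * Z ^ snd (snd m)))"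
    (is "_ = sum ?g _")
proof -
  let ?h = "\<lambda>(a :: nat, b :: nat, c :: nat). (a + 1, b, c)"
  have inj: "inj_on ?h (monoms (d - 1))" by (auto simp: inj_on_def)
  have img: "?h ` monoms (d - 1) = {m \<in> monoms d. fst m \<noteq> 0}"
  proof (rule set_eqI, rule iffI)
    fix m assume "m \<in> {m \<in> monoms d. fst m \<noteq> 0}"
    moreover obtain a b c where "m = (a, b, c)" by (cases m)
    ultimately have "(a - 1, b, c) \<in> monoms (d - 1)" "m = ?h (a - 1, b, c)" by (auto simp: monoms_def)
    then show "m \<in> ?h ` monoms (d - 1)" by blast
  qed (use assms in \<open>auto simp: monoms_def\<close>)
  have "sum ?g {m \<in> monoms d. fst m \<noteq> 0} = feval (d - 1) (dX F) (X, Y, Z)"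
    unfolding feval_def by (rule sum.reindex_cong[OF inj img[symmetric]]) (auto simp: dX_def)
  moreover have "sum ?g {m \<in> monoms d. fst m \<noteq> 0} = sum ?g (monoms d)"
    by (rule sum.mono_neutral_left) auto
  ultimately show ?thesis by simp
qed

lemma feval_dY_eq_sum:
  assumes "d \<ge> 1"
  shows "feval (d - 1) (dY F) (X, Y, Z) =
    (\<Sum>m\<in>monoms d. F m * (X ^ fst m * (of_nat (fst (snd m)) * Y ^ (fst (snd m) - 1)) * Z ^ snd (snd m)))"
    (is "_ = sum ?g _")
proof -
  let ?h = "\<lambda>(a :: nat, b :: nat, c :: nat). (a, b + 1, c)"
  have inj: "inj_on ?h (monoms (d - 1))" by (auto simp: inj_on_def)
  have img: "?h ` monoms (d - 1) = {m \<in> monoms d. fst (snd m) \<noteq> 0}"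
  proof (rule set_eqI, rule iffI)
    fix m assume "m \<in> {m \<in> monoms d. fst (snd m) \<noteq> 0}"
    moreover obtain a b c where "m = (a, b, c)" by (cases m)
    ultimately have "(a, b - 1, c) \<in> monoms (d - 1)" "m = ?h (a, b - 1, c)" by (auto simp: monoms_def)
    then show "m \<in> ?h ` monoms (d - 1)" by blast
  qed (use assms in \<open>auto simp: monoms_def\<close>)
  have "sum ?g {m \<in> monoms d. fst (snd m) \<noteq> 0} = feval (d - 1) (dY F) (X, Y, Z)"
    unfolding feval_def by (rule sum.reindex_cong[OF inj img[symmetric]]) (auto simp: dY_def)
  moreover have "sum ?g {m \<in> monoms d. fst (snd m) \<noteq> 0} = sum ?g (monoms d)"
    by (rule sum.mono_neutral_left) auto
  ultimately show ?thesis by simp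
qed

lemma feval_dZ_eq_sum:
  assumes "d \<ge> 1"
  shows "feval (d - 1) (dZ F) (X, Y, Z) =
    (\<Sum>m\<in>monoms d. F m * (X ^ fst m * Y ^ fst (snd m) * (of_nat (snd (snd m)) * Z ^ (snd (snd m) - 1))))"
    (is "_ = sum ?g _")
proof -
  let ?h = "\<lambda>(a :: nat, b :: nat, c :: nat). (a, b, c + 1)"
  have inj: "inj_on ?h (monoms (d - 1))" by (auto simp: inj_on_def)
  have img: "?h ` monoms (d - 1) = {m \<in> monoms d. snd (snd m) \<noteq> 0}"
  proof (rule set_eqI, rule iffI)
    fix m assume "m \<in> {m \<in> monoms d. snd (snd m) \<noteq> 0}"
    moreover obtain a b c where "m = (a, b, c)" by (cases m)
    ultimately have "(a, b, c - 1) \<in> monoms (d - 1)" "m = ?h (a, b, c - 1)" by (auto simp: monoms_def)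
    then show "m \<in> ?h ` monoms (d - 1)" by blast
  qed (use assms in \<open>auto simp: monoms_def\<close>)
  have "sum ?g {m \<in> monoms d. snd (snd m) \<noteq> 0} = feval (d - 1) (dZ F) (X, Y, Z)"
    unfolding feval_def by (rule sum.reindex_cong[OF inj img[symmetric]]) (auto simp: dZ_def)
  moreover have "sum ?g {m \<in> monoms d. snd (snd m) \<noteq> 0} = sum ?g (monoms d)"
    by (rule sum.mono_neutral_left) auto
  ultimately show ?thesis by simp
qed

definition grad :: "nat \<Rightarrow> form \<Rightarrow> cvec \<Rightarrow> cvec" where
  "grad d F v = (feval (d - 1) (dX F) v, feval (d - 1) (dY F) v, feval (d - 1) (dZ F) v)"

lemma has_field_derivative_feval:
  assumes d: "d \<ge> 1"
    and "(x has_field_derivative x') (at t within S)"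
    and "(y has_field_derivative y') (at t within S)"
    and "(z has_field_derivative z') (at t within S)"
  shows "((\<lambda>t. feval d F (x t, y t, z t)) has_field_derivative
            dot (grad d F (x t, y t, z t)) (x', y', z')) (at t within S)"
proof -
  have "((\<lambda>t. \<Sum>m\<in>monoms d. F m * (x t ^ fst m * y t ^ fst (snd m) * z t ^ snd (snd m)))
     has_field_derivative (\<Sum>m\<in>monoms d. F m * (
        (of_nat (fst m) * x t ^ (fst m - 1) * x') * y t ^ fst (snd m) * z t ^ snd (snd m)
      + x t ^ fst m * (of_nat (fst (snd m)) * y t ^ (fst (snd m) - 1) * y') * z t ^ snd (snd m)
      + x t ^ fst m * y t ^ fst (snd m) * (of_nat (snd (snd m)) * z t ^ (snd (snd m) - 1) * z'))))
     (at t within S)"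
    by (rule DERIV_sum, (rule derivative_eq_intros assms refl)+) (simp add: algebra_simps)
  then show ?thesis
    unfolding grad_def dot_def cvec_components feval_dX_eq_sum[OF d] feval_dY_eq_sum[OF d]
      feval_dZ_eq_sum[OF d]
    by (simp add: feval_def sum.distrib sum_distrib_left sum_distrib_right algebra_simps)
qed

lemma has_field_derivative_feval_lincomb:
  assumes "d \<ge> 1"
  shows "((\<lambda>t. feval d F (lincomb 1 p t q)) has_field_derivative
           dot (grad d F (lincomb 1 p t q)) q) (at t)"
proof -
  have "((\<lambda>t. feval d F (c1 p + t * c1 q, c2 p + t * c2 q, c3 p + t * c3 q)) has_field_derivative
          dot (grad d F (c1 p + t * c1 q, c2 p + t * c2 q, c3 p + t * c3 q)) (c1 q, c2 q, c3 q)) (at t)"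
    by (rule has_field_derivative_feval[OF assms]) (auto intro!: derivative_eq_intros)
  then show ?thesis by (simp add: lincomb_def)
qed

lemma euler_identity:
  assumes d: "d \<ge> 1"
  shows "dot (grad d F v) v = of_nat d * feval d F v"
proof -
  obtain X Y Z where v: "v = (X, Y, Z)" by (cases v)
  have "((\<lambda>s. feval d F (s * X, s * Y, s * Z)) has_field_derivative
            dot (grad d F (1 * X, 1 * Y, 1 * Z)) (X, Y, Z)) (at 1)"
    by (rule has_field_derivative_feval[OF d]) (auto intro!: derivative_eq_intros)
  moreover have "(\<lambda>s. feval d F (s * X, s * Y, s * Z)) = (\<lambda>s. s ^ d * feval d F (X, Y, Z))"
    using feval_smul[of d F _ "(X, Y, Z)"] by (simp add: smul_def)
  moreover have "((\<lambda>s. s ^ d * feval d F (X, Y, Z)) has_field_derivative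
            of_nat d * 1 ^ (d - 1) * feval d F (X, Y, Z)) (at 1)"
    by (auto intro!: derivative_eq_intros)
  ultimately show ?thesis by (simp add: v DERIV_unique)
qed

lemma grad_smul: "grad d F (smul s v) = smul (s ^ (d - 1)) (grad d F v)"
  using feval_smul[unfolded smul_def] by (simp add: grad_def smul_def)

definition dcomp :: "nat \<Rightarrow> form \<Rightarrow> form" where
  "dcomp k F = (if k = 1 then dX F else if k = 2 then dY F else dZ F)"

lemma cvec_comp_grad: "cvec_comp k (grad d F v) = feval (d - 1) (dcomp k F) v"
  by (simp add: cvec_comp_def dcomp_def grad_def)

lemma smooth_curve_grad_neq_zvec:
  assumes "smooth_curve d F" "v \<noteq> zvec" "feval d F v = 0"
  shows "grad d F v \<noteq> zvec"
  using assms by (cases v) (auto simp: smooth_curve_def grad_def zvec_def)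

definition monom_add :: "nat \<times> nat \<times> nat \<Rightarrow> nat \<times> nat \<times> nat \<Rightarrow> nat \<times> nat \<times> nat" where
  "monom_add m m' = (fst m + fst m', fst (snd m) + fst (snd m'), snd (snd m) + snd (snd m'))"

definition form_mult :: "nat \<Rightarrow> form \<Rightarrow> nat \<Rightarrow> form \<Rightarrow> form" where
  "form_mult d1 F d2 G =
     (\<lambda>m. \<Sum>m1\<in>monoms d1. \<Sum>m2\<in>monoms d2. if monom_add m1 m2 = m then F m1 * G m2 else 0)"

lemma monom_val_add: "monom_val v (monom_add m1 m2) = monom_val v m1 * monom_val v m2"
  by (simp add: monom_val_def monom_add_def power_add algebra_simps)

lemma monom_add_in_monoms:
  "m1 \<in> monoms d1 \<Longrightarrow> m2 \<in> monoms d2 \<Longrightarrow> monom_add m1 m2 \<in> monoms (d1 + d2)"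
  by (simp add: monoms_def monom_add_def)

lemma feval_form_mult: "feval (d1 + d2) (form_mult d1 F d2 G) v = feval d1 F v * feval d2 G v"
proof -
  let ?t = "\<lambda>m1 m2 m. (if monom_add m1 m2 = m then F m1 * G m2 else 0) * monom_val v m"
  have "feval (d1 + d2) (form_mult d1 F d2 G) v =
        (\<Sum>m\<in>monoms (d1 + d2). \<Sum>m1\<in>monoms d1. \<Sum>m2\<in>monoms d2. ?t m1 m2 m)"
    unfolding feval_eq_sum_monom_val form_mult_def by (simp add: sum_distrib_right)
  also have "\<dots> = (\<Sum>m1\<in>monoms d1. \<Sum>m2\<in>monoms d2. \<Sum>m\<in>monoms (d1 + d2). ?t m1 m2 m)"
    by (subst sum.swap) (subst (2) sum.swap, rule refl)
  also have "\<dots> = (\<Sum>m1\<in>monoms d1. \<Sum>m2\<in>monoms d2. F m1 * G m2 * monom_val v (monom_add m1 m2))"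
    by (intro sum.cong refl)
      (simp add: monom_add_in_monoms if_distrib[of "\<lambda>x. x * _"] cong: if_cong)
  also have "\<dots> = (\<Sum>m1\<in>monoms d1. F m1 * monom_val v m1) * (\<Sum>m2\<in>monoms d2. G m2 * monom_val v m2)"
    by (simp add: monom_val_add sum_product algebra_simps)
  finally show ?thesis by (simp add: feval_eq_sum_monom_val)
qed

lemma hom_form_form_mult: "hom_form (d1 + d2) (form_mult d1 F d2 G)"
  unfolding hom_form_def
proof (intro allI impI, rule ccontr)
  fix m assume nz: "form_mult d1 F d2 G m \<noteq> 0" and m: "m \<notin> monoms (d1 + d2)"
  have "form_mult d1 F d2 G m = 0"
    unfolding form_mult_def using monom_add_in_monoms m by (intro sum.neutral ballI) fastforce
  with nz show False by simp
qed

definition linear_form :: "cvec \<Rightarrow> form" where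
  "linear_form l = (\<lambda>m. if m = (1, 0, 0) then c1 l else if m = (0, 1, 0) then c2 l
                        else if m = (0, 0, 1) then c3 l else 0)"

lemma monoms_1: "monoms 1 = {(1, 0, 0), (0, 1, 0), (0, 0, 1)}"
proof (rule set_eqI)
  fix m :: "nat \<times> nat \<times> nat"
  obtain a b c where m: "m = (a, b, c)" by (cases m)
  show "m \<in> monoms 1 \<longleftrightarrow> m \<in> {(1, 0, 0), (0, 1, 0), (0, 0, 1)}"
    unfolding m monoms_def by (cases a; cases b; cases c) auto
qed

lemma feval_linear_form: "feval 1 (linear_form l) v = dot l v"
  unfolding feval_def monoms_1 by (simp add: linear_form_def dot_def)

lemma xform_eq_linear_form: "xform = linear_form (1, 0, 0)"
  by (simp add: xform_def linear_form_def fun_eq_iff)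

definition cubic_form :: "cvec \<Rightarrow> cvec \<Rightarrow> cvec \<Rightarrow> form" where
  "cubic_form a b c = form_mult 1 (linear_form a) 2 (form_mult 1 (linear_form b) 1 (linear_form c))"

lemma feval_cubic_form: "feval 3 (cubic_form a b c) v = dot a v * dot b v * dot c v"
proof -
  have "(3 :: nat) = 1 + 2" "(2 :: nat) = 1 + 1" by simp_all
  then show ?thesis
    unfolding cubic_form_def by (simp only: feval_form_mult feval_linear_form mult.assoc)
qed

lemma hom_form_cubic_form: "hom_form 3 (cubic_form a b c)"
proof -
  have "(3 :: nat) = 1 + 2" by simp
  then show ?thesis unfolding cubic_form_def by (simp only: hom_form_form_mult)
qed

section \<open>Plane curves and lines\<close>

definition line_poly :: "nat \<Rightarrow> form \<Rightarrow> cvec \<Rightarrow> cvec \<Rightarrow> complex poly" where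
  "line_poly d F a b = (\<Sum>m\<in>monoms d. smult (F m)
     ([:c1 a, c1 b:] ^ fst m * [:c2 a, c2 b:] ^ fst (snd m) * [:c3 a, c3 b:] ^ snd (snd m)))"

lemma poly_line_poly: "poly (line_poly d F a b) s = feval d F (lincomb 1 a s b)"
  by (simp add: line_poly_def feval_def poly_sum lincomb_def poly_power mult.assoc)

lemma degree_line_poly: "degree (line_poly d F a b) \<le> d"
  unfolding line_poly_def
proof (rule degree_sum_le)
  fix m assume m: "m \<in> monoms d"
  have "degree ([:c1 a, c1 b:] ^ fst m * [:c2 a, c2 b:] ^ fst (snd m) * [:c3 a, c3 b:] ^ snd (snd m))
     \<le> fst m + fst (snd m) + snd (snd m)"
    by (rule order.trans[OF degree_mult_le] add_mono order.trans[OF degree_power_le])+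
       (auto intro: order.trans[OF degree_power_le])
  also have "\<dots> = d" using m by (simp add: monoms_def)
  finally show "degree (smult (F m) ([:c1 a, c1 b:] ^ fst m * [:c2 a, c2 b:] ^ fst (snd m)
      * [:c3 a, c3 b:] ^ snd (snd m))) \<le> d"
    by (meson degree_smult_le order.trans)
qed auto

lemma line_poly_neq_0:
  assumes "feval d F b \<noteq> 0"
  shows "line_poly d F a b \<noteq> 0"
proof
  assume z: "line_poly d F a b = 0"
  have "poly (line_poly d F b a) t = 0" if "t \<noteq> 0" for t
  proof -
    have "lincomb 1 b t a = smul t (lincomb 1 a (1 / t) b)"
      using that by (simp add: lincomb_def smul_def field_simps)
    moreover have "feval d F (lincomb 1 a (1 / t) b) = 0"
      using z poly_line_poly[of d F a b "1 / t"] by simp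
    ultimately show ?thesis by (simp add: poly_line_poly feval_smul)
  qed
  then have "UNIV - {0} \<subseteq> {t. poly (line_poly d F b a) t = 0}" by auto
  moreover have "infinite (UNIV - {0 :: complex})" by (simp add: infinite_UNIV_char_0)
  ultimately have "line_poly d F b a = 0" using poly_roots_finite finite_subset by blast
  then have "poly (line_poly d F b a) 0 = 0" by simp
  with assms show False by (simp add: poly_line_poly lincomb_def)
qed

lemma card_nonzero_roots_plus_2_le_degree:
  fixes p :: "'a :: idom poly"
  assumes "p \<noteq> 0" "poly p 0 = 0" "poly (pderiv p) 0 = 0"
  shows "card {x. x \<noteq> 0 \<and> poly p x = 0} + 2 \<le> degree p"
proof -
  obtain r1 where r1: "p = [:0, 1:] * r1"
    using assms(2) poly_eq_0_iff_dvd[of p 0] by (auto elim: dvdE)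
  have "poly r1 0 = 0" using assms(3) by (simp add: r1 pderiv_mult pderiv_pCons)
  then obtain r where r: "r1 = [:0, 1:] * r"
    using poly_eq_0_iff_dvd[of r1 0] by (auto elim: dvdE)
  have r0: "r \<noteq> 0" using assms(1) by (auto simp: r1 r)
  have "{x. x \<noteq> 0 \<and> poly p x = 0} \<subseteq> {x. poly r x = 0}" by (auto simp: r1 r)
  then have "card {x. x \<noteq> 0 \<and> poly p x = 0} \<le> card {x. poly r x = 0}"
    by (intro card_mono poly_roots_finite r0)
  also have "\<dots> \<le> degree r" by (rule card_poly_roots_bound[OF r0])
  finally show ?thesis using r0 by (simp add: r1 r degree_mult_eq)
qed

lemma grad_orthogonal_if_line_in_curve:
  assumes "d \<ge> 1" "\<And>t. feval d F (lincomb 1 p t q) = 0"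
  shows "dot (grad d F p) q = 0"
proof -
  have "((\<lambda>t. feval d F (lincomb 1 p t q)) has_field_derivative dot (grad d F (lincomb 1 p 0 q)) q) (at 0)"
    by (rule has_field_derivative_feval_lincomb[OF assms(1)])
  then have "((\<lambda>t. 0) has_field_derivative dot (grad d F p) q) (at 0)"
    using assms(2) by (simp add: lincomb_def)
  then show ?thesis using DERIV_const DERIV_unique by blast
qed

lemma grad_on_line_in_curve:
  assumes d: "d \<ge> 1" and ab: "cross a b \<noteq> zvec" and Z: "\<And>s t. feval d F (lincomb s a t b) = 0"
  shows "\<exists>c. grad d F (lincomb s a t b) = smul c (cross a b)"
proof (rule orthogonal_to_both_imp_smul_cross[OF ab])
  have "lincomb 1 (lincomb s a t b) x a = lincomb (s + x) a t b" for x
    by (simp add: lincomb_def algebra_simps)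
  then show "dot (grad d F (lincomb s a t b)) a = 0"
    using d by (intro grad_orthogonal_if_line_in_curve) (simp_all add: Z)
  have "lincomb 1 (lincomb s a t b) x b = lincomb s a (t + x) b" for x
    by (simp add: lincomb_def algebra_simps)
  then show "dot (grad d F (lincomb s a t b)) b = 0"
    using d by (intro grad_orthogonal_if_line_in_curve) (simp_all add: Z)
qed

lemma poly_eq_poly_0_if_no_roots:
  fixes p :: "complex poly"
  assumes "\<And>z. poly p z \<noteq> 0"
  shows "poly p z = poly p 0"
proof -
  have "constant (poly p)" using fundamental_theorem_of_algebra assms by blast
  then show ?thesis unfolding constant_def by blast
qed

text \<open>If the line through \<open>a\<close> and \<open>b\<close> lay on the curve, the gradient along it would be a
  multiple of \<open>a \<times> b\<close> and nowhere zero; a nonvanishing component of it is then a polynomial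
  without roots on each affine piece of the line, hence constant, contradicting its
  homogeneity of degree \<open>d - 1 \<ge> 1\<close>.\<close>

lemma smooth_curve_contains_no_line:
  assumes sm: "smooth_curve d F" and d: "d \<ge> 2" and ab: "cross a b \<noteq> zvec"
  shows "\<exists>s t. feval d F (lincomb s a t b) \<noteq> 0"
proof (rule ccontr)
  assume "\<not> ?thesis"
  then have Z: "\<And>s t. feval d F (lincomb s a t b) = 0" by blast
  have grad_on_line: "\<exists>c. grad d F (lincomb s a t b) = smul c (cross a b)" for s t
    using d by (intro grad_on_line_in_curve[OF _ ab Z]) simp
  obtain k where k: "cvec_comp k (cross a b) \<noteq> 0" using cvec_comp_nonzero[OF ab] by blast
  define G where "G = (\<lambda>v. cvec_comp k (grad d F v))"
  have no_root: "G (lincomb s a t b) \<noteq> 0" if "s \<noteq> 0 \<or> t \<noteq> 0" for s t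
  proof
    assume h: "G (lincomb s a t b) = 0"
    obtain c where c: "grad d F (lincomb s a t b) = smul c (cross a b)" using grad_on_line by blast
    from h k have "c = 0" by (simp add: G_def c cvec_comp_smul)
    then have "grad d F (lincomb s a t b) = zvec" by (simp add: c smul_def zvec_def)
    moreover have "grad d F (lincomb s a t b) \<noteq> zvec"
      by (rule smooth_curve_grad_neq_zvec[OF sm lincomb_neq_zvec[OF ab that] Z])
    ultimately show False by simp
  qed
  have constant_on_line: "G (lincomb 1 p s q) = G (lincomb 1 p 0 q)"
    if "\<And>s. G (lincomb 1 p s q) \<noteq> 0" for p q s
    using poly_eq_poly_0_if_no_roots[of "line_poly (d - 1) (dcomp k F) p q"] that
    by (simp add: G_def poly_line_poly cvec_comp_grad)
  have const_a: "G (lincomb 1 a s b) = G (lincomb 1 a 0 b)" for s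
    using no_root[of 1] by (intro constant_on_line) simp
  have const_b: "G (lincomb 1 b s a) = G (lincomb 1 b 0 a)" for s
  proof (rule constant_on_line)
    show "G (lincomb 1 b s a) \<noteq> 0" for s
      using no_root[of s 1] by (simp add: lincomb_def algebra_simps)
  qed
  have "G (lincomb 1 a s b) = s ^ (d - 1) * G (lincomb 1 b 0 a)" if "s \<noteq> 0" for s
  proof -
    have "lincomb 1 a s b = smul s (lincomb 1 b (1 / s) a)"
      using that by (simp add: lincomb_def smul_def field_simps)
    then show ?thesis using const_b[of "1 / s"] by (simp add: G_def grad_smul cvec_comp_smul)
  qed
  from this[of 1] this[of 2] const_a[of 1] const_a[of 2]
  have "(2 ^ (d - 1) - 1) * G (lincomb 1 b 0 a) = 0" by (simp add: algebra_simps)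
  moreover have "(2 :: complex) ^ (d - 1) \<noteq> 1"
  proof -
    have "(2 :: nat) ^ (d - 1) \<noteq> 1" using d by simp
    moreover have "(2 :: complex) ^ (d - 1) = of_nat (2 ^ (d - 1))" by simp
    ultimately show ?thesis using of_nat_eq_1_iff by metis
  qed
  ultimately have "G (lincomb 1 b 0 a) = 0" by simp
  with no_root[of 0 1] show False by (simp add: lincomb_def)
qed

lemma cross_lincomb_self_left: "cross (lincomb 1 v s b) v = smul s (cross b v)"
  by (simp add: cross_def lincomb_def smul_def algebra_simps)

lemma point_on_line_as_lincomb:
  assumes l: "l \<noteq> zvec" and "dot l p = 0" "dot l b = 0" "dot l q = 0"
    and pb: "cross p b \<noteq> zvec" and qb: "cross q b \<noteq> zvec"
  shows "\<exists>a s. a \<noteq> 0 \<and> q = smul a (lincomb 1 p s b)"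
proof -
  have "det3 q p b = 0" by (rule det3_eq_0_if_orthogonal[OF l]) (use assms in auto)
  then obtain a t where q: "q = lincomb a p t b" using det3_eq_0_imp_lincomb[OF pb] by blast
  have "a \<noteq> 0"
  proof
    assume "a = 0"
    then have "cross q b = zvec" by (simp add: q lincomb_def cross_def zvec_def algebra_simps)
    with qb show False by simp
  qed
  then have "q = smul a (lincomb 1 p (t / a) b)" by (simp add: q lincomb_def smul_def field_simps)
  with \<open>a \<noteq> 0\<close> show ?thesis by blast
qed

lemma line_curve_param:
  assumes sm: "smooth_curve d F" and d: "d \<ge> 2" and l: "l \<noteq> zvec"
    and p: "p \<noteq> zvec" "feval d F p = 0" "dot l p = 0"
  obtains b where "dot l b = 0" "cross p b \<noteq> zvec" "line_poly d F p b \<noteq> 0"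
    "\<And>q. q \<noteq> zvec \<Longrightarrow> feval d F q = 0 \<Longrightarrow> dot l q = 0 \<Longrightarrow>
       \<exists>a s. a \<noteq> 0 \<and> poly (line_poly d F p b) s = 0 \<and> q = smul a (lincomb 1 p s b)"
proof -
  obtain j where j: "cvec_comp j p \<noteq> 0" using cvec_comp_nonzero[OF p(1)] by blast
  define e where "e = cross l (unit_cvec j)"
  have le: "dot l e = 0" by (simp add: e_def dot_cross_left)
  have "cross p e = lincomb (cvec_comp j p) l (- dot p l) (unit_cvec j)"
    by (simp add: e_def cross_cross_right dot_unit_cvec)
  also have "\<dots> = smul (cvec_comp j p) l" using p(3) by (simp add: dot_commute[of p l] lincomb_def smul_def)
  finally have pe: "cross p e \<noteq> zvec" using j l by (simp add: smul_eq_zvec_iff)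
  obtain \<alpha> \<beta> where Fb: "feval d F (lincomb \<alpha> p \<beta> e) \<noteq> 0"
    using smooth_curve_contains_no_line[OF sm d pe] by blast
  define b where "b = lincomb \<alpha> p \<beta> e"
  have lb: "dot l b = 0" using p(3) le by (simp add: b_def dot_lincomb_right)
  have Fb: "feval d F b \<noteq> 0" using Fb by (simp add: b_def)
  have not_smul: "cross q b \<noteq> zvec" if q: "q \<noteq> zvec" "feval d F q = 0" for q
  proof
    assume "cross q b = zvec"
    then obtain c where "b = smul c q" using cross_eq_zvec_imp_smul q(1) by blast
    with Fb q(2) show False by (simp add: feval_smul)
  qed
  show ?thesis
  proof (rule that[OF lb not_smul[OF p(1,2)] line_poly_neq_0[OF Fb]])
    fix q assume q: "q \<noteq> zvec" "feval d F q = 0" "dot l q = 0"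
    then obtain a s where as: "a \<noteq> 0" "q = smul a (lincomb 1 p s b)"
      using point_on_line_as_lincomb[OF l p(3) lb q(3) not_smul[OF p(1,2)] not_smul[OF q(1,2)]]
      by blast
    then have "poly (line_poly d F p b) s = 0" using q(2) by (simp add: poly_line_poly feval_smul)
    with as show "\<exists>a s. a \<noteq> 0 \<and> poly (line_poly d F p b) s = 0 \<and> q = smul a (lincomb 1 p s b)"
      by blast
  qed
qed

lemma line_curve_param_family:
  fixes q :: "nat \<Rightarrow> cvec"
  assumes sm: "smooth_curve d F" and d: "d \<ge> 2" and l: "l \<noteq> zvec"
    and p: "p \<noteq> zvec" "feval d F p = 0" "dot l p = 0"
    and q: "\<And>k. k < n \<Longrightarrow> q k \<noteq> zvec \<and> feval d F (q k) = 0 \<and> dot l (q k) = 0"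
    and q_distinct: "\<And>j k. j < n \<Longrightarrow> k < n \<Longrightarrow> j \<noteq> k \<Longrightarrow> cross (q j) (q k) \<noteq> zvec"
  obtains b a s where "dot l b = 0" "cross p b \<noteq> zvec" "line_poly d F p b \<noteq> 0"
    "\<And>k. k < n \<Longrightarrow> a k \<noteq> 0 \<and> poly (line_poly d F p b) (s k) = 0 \<and> q k = smul (a k) (lincomb 1 p (s k) b)"
    "inj_on s {..<n}"
proof -
  obtain b where b: "dot l b = 0" "cross p b \<noteq> zvec" "line_poly d F p b \<noteq> 0"
    and param: "\<And>q. q \<noteq> zvec \<Longrightarrow> feval d F q = 0 \<Longrightarrow> dot l q = 0 \<Longrightarrow>
       \<exists>a s. a \<noteq> 0 \<and> poly (line_poly d F p b) s = 0 \<and> q = smul a (lincomb 1 p s b)"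
    using line_curve_param[OF sm d l p] by blast
  have "\<forall>k\<in>{..<n}. \<exists>a s. a \<noteq> 0 \<and> poly (line_poly d F p b) s = 0 \<and> q k = smul a (lincomb 1 p s b)"
    using param q by blast
  then obtain a s where as: "\<And>k. k < n \<Longrightarrow>
      a k \<noteq> 0 \<and> poly (line_poly d F p b) (s k) = 0 \<and> q k = smul (a k) (lincomb 1 p (s k) b)"
    by (metis lessThan_iff)
  have "inj_on s {..<n}"
  proof (rule inj_onI, rule ccontr)
    fix j k assume j: "j \<in> {..<n}" and k: "k \<in> {..<n}" and "s j = s k" "j \<noteq> k"
    then have "q j = smul (a j / a k) (q k)" using as[of j] as[of k] by (simp add: smul_def)
    then have "cross (q k) (q j) = zvec" by (simp add: cross_smul_self)
    with q_distinct[of k j] j k \<open>j \<noteq> k\<close> show False by auto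
  qed
  with b as show ?thesis by (rule that)
qed

lemma line_poly_double_root_0:
  assumes d: "d \<ge> 1" and v: "feval d F v = 0" and b: "dot (grad d F v) b = 0"
  shows "poly (line_poly d F v b) 0 = 0" "poly (pderiv (line_poly d F v b)) 0 = 0"
proof -
  show "poly (line_poly d F v b) 0 = 0" using v by (simp add: poly_line_poly lincomb_def)
  have "((\<lambda>t. poly (line_poly d F v b) t) has_field_derivative 0) (at 0)"
    using has_field_derivative_feval_lincomb[of d F v b 0] d b by (simp add: poly_line_poly lincomb_def)
  then show "poly (pderiv (line_poly d F v b)) 0 = 0" using DERIV_unique poly_DERIV by blast
qed

text \<open>A line containing \<open>d\<close> distinct points of the curve: a further common point, or a
  tangency at one of the \<open>d\<close> points, would give \<open>d + 1\<close> roots, counted with multiplicity, of the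
  restriction of the form to the line.\<close>

lemma line_curve_points_exhaust:
  fixes q :: "nat \<Rightarrow> cvec"
  assumes sm: "smooth_curve d F" and d: "d \<ge> 2" and l: "l \<noteq> zvec"
    and q: "\<And>k. k < d \<Longrightarrow> q k \<noteq> zvec \<and> feval d F (q k) = 0 \<and> dot l (q k) = 0"
    and q_distinct: "\<And>j k. j < d \<Longrightarrow> k < d \<Longrightarrow> j \<noteq> k \<Longrightarrow> cross (q j) (q k) \<noteq> zvec"
    and v: "v \<noteq> zvec" "feval d F v = 0" "dot l v = 0"
  shows "\<exists>k<d. cross (q k) v = zvec"
proof (rule ccontr)
  assume none: "\<not> ?thesis"
  show False
  proof (rule line_curve_param_family[where q = q, OF sm d l v q q_distinct])
    fix b :: cvec and a s :: "nat \<Rightarrow> complex"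
    assume nz: "line_poly d F v b \<noteq> 0"
      and as: "\<And>k. k < d \<Longrightarrow>
        a k \<noteq> 0 \<and> poly (line_poly d F v b) (s k) = 0 \<and> q k = smul (a k) (lincomb 1 v (s k) b)"
      and inj: "inj_on s {..<d}"
    have s0: "s k \<noteq> 0" if "k < d" for k
    proof
      assume "s k = 0"
      then have "q k = smul (a k) v" using as[OF that] by (simp add: lincomb_def)
      then have "cross (q k) v = zvec"
        by (simp only: cross_smul_left cross_self) (simp add: smul_def zvec_def)
      with none that show False by blast
    qed
    have "poly (line_poly d F v b) 0 = 0" using v(2) by (simp add: poly_line_poly lincomb_def)
    moreover have "poly (line_poly d F v b) (s k) = 0" if "k < d" for k using as[OF that] by simp
    ultimately have "insert 0 (s ` {..<d}) \<subseteq> {x. poly (line_poly d F v b) x = 0}" by auto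
    then have "card (insert 0 (s ` {..<d})) \<le> card {x. poly (line_poly d F v b) x = 0}"
      by (rule card_mono[OF poly_roots_finite[OF nz]])
    moreover have "card {x. poly (line_poly d F v b) x = 0} \<le> d"
      using card_poly_roots_bound[OF nz] degree_line_poly[of d F v b] by (rule order.trans)
    moreover have "card (insert 0 (s ` {..<d})) = d + 1"
    proof -
      have "0 \<notin> s ` {..<d}" using s0 by auto
      then show ?thesis using inj by (simp add: card_image)
    qed
    ultimately show False by simp
  qed
qed

lemma line_curve_points_transversal:
  fixes q :: "nat \<Rightarrow> cvec"
  assumes sm: "smooth_curve d F" and d: "d \<ge> 2" and l: "l \<noteq> zvec"
    and q: "\<And>k. k < d \<Longrightarrow> q k \<noteq> zvec \<and> feval d F (q k) = 0 \<and> dot l (q k) = 0"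
    and q_distinct: "\<And>j k. j < d \<Longrightarrow> k < d \<Longrightarrow> j \<noteq> k \<Longrightarrow> cross (q j) (q k) \<noteq> zvec"
    and v: "v \<noteq> zvec" "feval d F v = 0" "dot l v = 0"
    and u: "dot (grad d F v) u = 0" "cross v u \<noteq> zvec"
  shows "dot l u \<noteq> 0"
proof
  assume lu: "dot l u = 0"
  obtain k0 where k0: "k0 < d" "cross (q k0) v = zvec"
    using line_curve_points_exhaust[where q = q, OF sm d l q q_distinct v] by blast
  show False
  proof (rule line_curve_param_family[where q = q, OF sm d l v q q_distinct])
    fix b :: cvec and a s :: "nat \<Rightarrow> complex"
    assume lb: "dot l b = 0" and vb: "cross v b \<noteq> zvec" and nz: "line_poly d F v b \<noteq> 0"
      and as: "\<And>k. k < d \<Longrightarrow>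
        a k \<noteq> 0 \<and> poly (line_poly d F v b) (s k) = 0 \<and> q k = smul (a k) (lincomb 1 v (s k) b)"
      and inj: "inj_on s {..<d}"
    have gb: "dot (grad d F v) b = 0"
    proof -
      have "det3 b v u = 0" by (rule det3_eq_0_if_orthogonal[OF l]) (use lb v lu in auto)
      then obtain \<alpha> \<beta> where "b = lincomb \<alpha> v \<beta> u" using det3_eq_0_imp_lincomb[OF u(2)] by blast
      moreover have "dot (grad d F v) v = 0" using euler_identity[of d F v] d v(2) by simp
      ultimately show ?thesis by (simp add: dot_lincomb_right u(1))
    qed
    have "s k0 = 0"
    proof -
      have "cross (q k0) v = smul (a k0) (smul (s k0) (cross b v))"
        using as[OF k0(1)] by (simp add: cross_smul_left cross_lincomb_self_left)
      moreover have "cross b v \<noteq> zvec" using vb cross_eq_zvec_commute by blast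
      ultimately show ?thesis using as[OF k0(1)] k0(2) by (simp add: smul_eq_zvec_iff)
    qed
    have "s ` ({..<d} - {k0}) \<subseteq> {x. x \<noteq> 0 \<and> poly (line_poly d F v b) x = 0}"
    proof
      fix x assume "x \<in> s ` ({..<d} - {k0})"
      then obtain j where j: "j < d" "j \<noteq> k0" "x = s j" by blast
      have "s j \<noteq> s k0" using inj_onD[OF inj, of j k0] j k0(1) by auto
      with j as[OF j(1)] \<open>s k0 = 0\<close> show "x \<in> {x. x \<noteq> 0 \<and> poly (line_poly d F v b) x = 0}"
        by simp
    qed
    then have "card (s ` ({..<d} - {k0})) \<le> card {x. x \<noteq> 0 \<and> poly (line_poly d F v b) x = 0}"
      by (rule card_mono[OF finite_subset[OF _ poly_roots_finite[OF nz]], rotated]) blast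
    moreover have "card (s ` ({..<d} - {k0})) = d - 1"
      using k0(1) by (subst card_image) (auto intro: inj_on_subset[OF inj])
    moreover have "card {x. x \<noteq> 0 \<and> poly (line_poly d F v b) x = 0} + 2 \<le> degree (line_poly d F v b)"
      using d v(2) gb by (intro card_nonzero_roots_plus_2_le_degree[OF nz] line_poly_double_root_0) auto
    ultimately show False using degree_line_poly[of d F v b] d by linarith
  qed
qed

section \<open>A holomorphic implicit function theorem\<close>

fun picard_iter :: "(complex \<Rightarrow> complex \<Rightarrow> complex) \<Rightarrow> nat \<Rightarrow> complex \<Rightarrow> complex" where
  "picard_iter T 0 a = 0"
| "picard_iter T (Suc n) a = T a (picard_iter T n a)"

lemma picard_iter_norm_le:
  assumes r: "r > 0"
    and lip: "\<And>x y. norm x \<le> r \<Longrightarrow> norm y \<le> r \<Longrightarrow> norm (T a x - T a y) \<le> 1/2 * norm (x - y)"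
    and T0: "norm (T a 0) \<le> r / 2"
  shows "norm (picard_iter T n a) \<le> r"
proof -
  have T_bound: "norm (T a x) \<le> r" if "norm x \<le> r" for x
  proof -
    have "norm (T a x) \<le> norm (T a x - T a 0) + norm (T a 0)"
      using norm_triangle_ineq[of "T a x - T a 0" "T a 0"] by simp
    also have "\<dots> \<le> 1/2 * norm x + r / 2" using lip[OF that, of 0] T0 r by (intro add_mono) auto
    finally show ?thesis using that by simp
  qed
  show ?thesis by (induction n) (use r T_bound in auto)
qed

lemma picard_iter_dist_le:
  assumes r: "r > 0"
    and lip: "\<And>x y. norm x \<le> r \<Longrightarrow> norm y \<le> r \<Longrightarrow> norm (T a x - T a y) \<le> 1/2 * norm (x - y)"
    and T0: "norm (T a 0) \<le> r / 2"
  shows "norm (picard_iter T (n + k) a - picard_iter T n a) \<le> r * (1/2) ^ n"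
proof -
  note bound = picard_iter_norm_le[where T = T and a = a, OF r lip T0]
  have step: "norm (picard_iter T (Suc n) a - picard_iter T n a) \<le> (1/2) ^ n * (r / 2)" for n
  proof (induction n)
    case 0 then show ?case using T0 by simp
  next
    case (Suc n)
    have "norm (picard_iter T (Suc (Suc n)) a - picard_iter T (Suc n) a)
        = norm (T a (picard_iter T (Suc n) a) - T a (picard_iter T n a))"
      by (simp only: picard_iter.simps)
    also have "\<dots> \<le> 1/2 * norm (picard_iter T (Suc n) a - picard_iter T n a)"
      by (rule lip[OF bound bound])
    also have "\<dots> \<le> 1/2 * ((1/2) ^ n * (r / 2))" using Suc by simp
    finally show ?case by simp
  qed
  have "norm (picard_iter T (n + k) a - picard_iter T n a) \<le> r * (1/2) ^ n * (1 - (1/2) ^ k)"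
  proof (induction k)
    case 0 then show ?case by simp
  next
    case (Suc k)
    have "norm (picard_iter T (Suc (n + k)) a - picard_iter T n a)
        \<le> (1/2) ^ (n + k) * (r / 2) + r * (1/2) ^ n * (1 - (1/2) ^ k)"
      using step[of "n + k"] Suc by (rule norm_diff_triangle_le)
    also have "\<dots> = r * (1/2) ^ n * (1 - (1/2) ^ Suc k)" by (simp add: power_add field_simps)
    finally show ?case by simp
  qed
  also have "\<dots> \<le> r * (1/2) ^ n" using r by (simp add: mult_left_le)
  finally show ?thesis .
qed

lemma uniformly_Cauchy_on_picard_iter:
  assumes r: "r > 0"
    and lip: "\<And>a x y. a \<in> A \<Longrightarrow> norm x \<le> r \<Longrightarrow> norm y \<le> r \<Longrightarrow>
                norm (T a x - T a y) \<le> 1/2 * norm (x - y)"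
    and T0: "\<And>a. a \<in> A \<Longrightarrow> norm (T a 0) \<le> r / 2"
  shows "uniformly_Cauchy_on A (picard_iter T)"
proof (rule uniformly_Cauchy_onI)
  fix e :: real assume e: "e > 0"
  obtain M where M: "(1/2) ^ M < e / (2 * r)"
    using real_arch_pow_inv[of "e / (2 * r)" "1/2"] e r by auto
  show "\<exists>M. \<forall>x\<in>A. \<forall>m\<ge>M. \<forall>n\<ge>M. dist (picard_iter T m x) (picard_iter T n x) < e"
  proof (intro exI ballI allI impI)
    fix x m n assume x: "x \<in> A" and m: "m \<ge> M" and n: "n \<ge> M"
    note dist_le = picard_iter_dist_le[where T = T and a = x, OF r lip[OF x] T0[OF x]]
    have "dist (picard_iter T m x) (picard_iter T n x)
        \<le> dist (picard_iter T m x) (picard_iter T M x) + dist (picard_iter T n x) (picard_iter T M x)"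
      by (rule dist_triangle2)
    also have "\<dots> \<le> r * (1/2) ^ M + r * (1/2) ^ M"
      using dist_le[of M "m - M"] dist_le[of M "n - M"] m n by (intro add_mono) (auto simp: dist_norm)
    also have "\<dots> < e" using M r by (simp add: field_simps)
    finally show "dist (picard_iter T m x) (picard_iter T n x) < e" .
  qed
qed

lemma parametric_contraction_fixpoint:
  assumes r: "r > 0"
    and lip: "\<And>a x y. a \<in> A \<Longrightarrow> norm x \<le> r \<Longrightarrow> norm y \<le> r \<Longrightarrow>
                norm (T a x - T a y) \<le> 1/2 * norm (x - y)"
    and T0: "\<And>a. a \<in> A \<Longrightarrow> norm (T a 0) \<le> r / 2"
  obtains g where "uniform_limit A (picard_iter T) g sequentially"
    "\<And>a. a \<in> A \<Longrightarrow> T a (g a) = g a \<and> norm (g a) \<le> r"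
    "\<And>a b. a \<in> A \<Longrightarrow> norm b \<le> r \<Longrightarrow> T a b = b \<Longrightarrow> b = g a"
proof -
  obtain g where g: "uniform_limit A (picard_iter T) g sequentially"
    using Cauchy_uniformly_convergent[OF uniformly_Cauchy_on_picard_iter[where T = T and A = A, OF r lip T0]]
    unfolding uniformly_convergent_on_def by blast
  have bound: "norm (picard_iter T n a) \<le> r" if "a \<in> A" for a n
    using picard_iter_norm_le[where T = T and a = a, OF r lip[OF that] T0[OF that]] .
  have lim: "(\<lambda>n. picard_iter T n a) \<longlonglongrightarrow> g a" if "a \<in> A" for a
    by (rule tendsto_uniform_limitI[OF g that])
  have g_bound: "norm (g a) \<le> r" if "a \<in> A" for a
    using lim[OF that] bound[OF that] by (intro Lim_norm_ubound[of sequentially]) auto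
  have g_fixed: "T a (g a) = g a" if a: "a \<in> A" for a
  proof -
    have "(\<lambda>n. norm (picard_iter T n a - g a)) \<longlonglongrightarrow> 0"
      using lim[OF a] by (simp add: tendsto_norm_zero_iff LIM_zero_iff)
    then have "(\<lambda>n. 1/2 * norm (picard_iter T n a - g a)) \<longlonglongrightarrow> 0"
      by (rule tendsto_mult_right_zero)
    moreover have "\<forall>\<^sub>F n in sequentially.
        norm (T a (picard_iter T n a) - T a (g a)) \<le> 1/2 * norm (picard_iter T n a - g a)"
      by (intro always_eventually allI lip[OF a bound[OF a] g_bound[OF a]])
    ultimately have "(\<lambda>n. T a (picard_iter T n a) - T a (g a)) \<longlonglongrightarrow> 0"
      by (rule Lim_null_comparison[rotated])
    then have "(\<lambda>n. picard_iter T (Suc n) a) \<longlonglongrightarrow> T a (g a)" by (simp add: LIM_zero_iff)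
    moreover have "(\<lambda>n. picard_iter T (Suc n) a) \<longlonglongrightarrow> g a" by (rule LIMSEQ_Suc[OF lim[OF a]])
    ultimately show ?thesis by (rule LIMSEQ_unique)
  qed
  show ?thesis
  proof (rule that[OF g])
    show "T a (g a) = g a \<and> norm (g a) \<le> r" if "a \<in> A" for a
      using g_fixed[OF that] g_bound[OF that] ..
    show "b = g a" if "a \<in> A" "norm b \<le> r" "T a b = b" for a b
    proof -
      have "norm (b - g a) \<le> 1/2 * norm (b - g a)"
        using lip[OF that(1,2) g_bound[OF that(1)]] that(3) g_fixed[OF that(1)] by simp
      then show ?thesis by simp
    qed
  qed
qed

lemma holomorphic_on_picard_iter:
  assumes hol: "\<And>h. h holomorphic_on UNIV \<Longrightarrow> (\<lambda>a. T a (h a)) holomorphic_on UNIV"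
  shows "picard_iter T n holomorphic_on UNIV"
proof (induction n)
  case 0
  have "picard_iter T 0 = (\<lambda>_. 0)" by (simp add: fun_eq_iff)
  then show ?case by (simp add: holomorphic_on_const)
next
  case (Suc n)
  have "picard_iter T (Suc n) = (\<lambda>a. T a (picard_iter T n a))" by (simp add: fun_eq_iff)
  with hol[OF Suc.IH] show ?case by simp
qed

text \<open>The implicit function is the fixed point of the Newton-type map
  \<open>b \<mapsto> b - f a b / c\<close> with the frozen slope \<open>c = f\<^sub>b 0 0\<close>, a contraction near \<open>(0, 0)\<close>.\<close>

lemma newton_map_contraction:
  fixes f fb :: "complex \<Rightarrow> complex \<Rightarrow> complex"
  assumes fd: "\<And>a b. (f a has_field_derivative fb a b) (at b)"
    and fb_cont: "continuous_on UNIV (\<lambda>z. fb (fst z) (snd z))" and c: "fb 0 0 \<noteq> 0"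
  shows "\<exists>r>0. \<forall>a x y. norm a \<le> r \<longrightarrow> norm x \<le> r \<longrightarrow> norm y \<le> r \<longrightarrow>
    norm ((x - f a x / fb 0 0) - (y - f a y / fb 0 0)) \<le> 1/2 * norm (x - y)"
proof -
  define c where "c = fb 0 0"
  have c_neq_0: "c \<noteq> 0" using c by (simp add: c_def)
  obtain \<delta> where \<delta>: "\<delta> > 0" "\<And>z. dist z (0, 0) < \<delta> \<Longrightarrow> dist (fb (fst z) (snd z)) c < norm c / 2"
    using fb_cont c unfolding continuous_on_iff c_def
    by (metis UNIV_I divide_pos_pos fst_conv snd_conv zero_less_norm_iff zero_less_numeral)
  define r where "r = \<delta> / 3"
  have r: "r > 0" using \<delta> by (simp add: r_def)
  have fb_near_c: "norm (fb a b - c) \<le> norm c / 2" if "norm a \<le> r" "norm b \<le> r" for a b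
  proof -
    have "dist (a, b) (0, 0) = sqrt ((norm a)\<^sup>2 + (norm b)\<^sup>2)" by (simp add: dist_prod_def)
    also have "\<dots> \<le> norm a + norm b" by (rule sqrt_sum_squares_le_sum) auto
    also have "\<dots> < \<delta>" using that r_def \<delta> by simp
    finally show ?thesis using \<delta>(2)[of "(a, b)"] by (simp add: dist_norm)
  qed
  have "norm ((x - f a x / c) - (y - f a y / c)) \<le> 1/2 * norm (x - y)"
    if "norm a \<le> r" "norm x \<le> r" "norm y \<le> r" for a x y
  proof (rule field_differentiable_bound[of "cball 0 r"])
    show "((\<lambda>b. b - f a b / c) has_field_derivative (1 - fb a z / c)) (at z within cball 0 r)" for z
      by (rule has_field_derivative_at_within) (use c_neq_0 in \<open>auto intro!: derivative_eq_intros fd\<close>)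
    show "norm (1 - fb a z / c) \<le> 1/2" if "z \<in> cball 0 r" for z
    proof -
      have "1 - fb a z / c = (c - fb a z) / c" using c_neq_0 by (simp add: field_simps)
      then have "norm (1 - fb a z / c) = norm (fb a z - c) / norm c"
        by (simp add: norm_divide norm_minus_commute)
      also have "\<dots> \<le> (norm c / 2) / norm c"
        using fb_near_c[of a z] \<open>norm a \<le> r\<close> that by (intro divide_right_mono) auto
      finally show ?thesis using c_neq_0 by simp
    qed
  qed (use that convex_cball in auto)
  with r show ?thesis unfolding c_def by blast
qed

lemma holomorphic_implicit_function:
  fixes f fb :: "complex \<Rightarrow> complex \<Rightarrow> complex"
  assumes fd: "\<And>a b. (f a has_field_derivative fb a b) (at b)"
    and fb_cont: "continuous_on UNIV (\<lambda>z. fb (fst z) (snd z))"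
    and hol: "\<And>h. h holomorphic_on UNIV \<Longrightarrow> (\<lambda>a. f a (h a)) holomorphic_on UNIV"
    and f00: "f 0 0 = 0" and c0: "fb 0 0 \<noteq> 0"
  obtains r \<rho> g where "r > 0" "\<rho> > 0" "g holomorphic_on ball 0 \<rho>"
    "\<And>a. a \<in> cball 0 \<rho> \<Longrightarrow> f a (g a) = 0 \<and> norm (g a) \<le> r" "g 0 = 0"
    "\<And>a b. a \<in> cball 0 \<rho> \<Longrightarrow> norm b \<le> r \<Longrightarrow> f a b = 0 \<Longrightarrow> b = g a"
proof -
  define c where "c = fb 0 0"
  have c: "c \<noteq> 0" using c0 by (simp add: c_def)
  define T where "T = (\<lambda>a b. b - f a b / c)"
  obtain r where r: "r > 0" and lip: "\<forall>a x y. norm a \<le> r \<longrightarrow> norm x \<le> r \<longrightarrow> norm y \<le> r \<longrightarrow>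
      norm ((x - f a x / fb 0 0) - (y - f a y / fb 0 0)) \<le> 1/2 * norm (x - y)"
    using newton_map_contraction[OF fd fb_cont c0] by blast
  have T_lip: "norm (T a x - T a y) \<le> 1/2 * norm (x - y)"
    if "norm a \<le> r" "norm x \<le> r" "norm y \<le> r" for a x y
    using lip that by (simp add: T_def c_def)
  have "continuous_on UNIV (\<lambda>a. f a 0)"
    using hol[of "\<lambda>_. 0"] by (simp add: holomorphic_on_imp_continuous_on)
  then have "isCont (\<lambda>a. f a 0) 0" by (simp add: continuous_on_eq_continuous_at)
  moreover have "norm c * r / 2 > 0" using c r by simp
  ultimately obtain d where d: "d > 0" "\<And>a. dist a 0 < d \<Longrightarrow> dist (f a 0) (f 0 0) < norm c * r / 2"
    unfolding continuous_at_eps_delta by blast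
  define \<rho> where "\<rho> = min r (d / 2)"
  have \<rho>: "\<rho> > 0" "\<rho> \<le> r" using r d by (auto simp: \<rho>_def)
  obtain g where g: "uniform_limit (cball 0 \<rho>) (picard_iter T) g sequentially"
    and g_fixed: "\<And>a. a \<in> cball 0 \<rho> \<Longrightarrow> T a (g a) = g a \<and> norm (g a) \<le> r"
    and g_unique: "\<And>a b. a \<in> cball 0 \<rho> \<Longrightarrow> norm b \<le> r \<Longrightarrow> T a b = b \<Longrightarrow> b = g a"
  proof (rule parametric_contraction_fixpoint[where T = T and A = "cball 0 \<rho>"])
    show "r > 0" by (rule r)
    show "norm (T a x - T a y) \<le> 1/2 * norm (x - y)"
      if "a \<in> cball 0 \<rho>" "norm x \<le> r" "norm y \<le> r" for a x y
      using T_lip that \<rho>(2) by simp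
    show "norm (T a 0) \<le> r / 2" if "a \<in> cball 0 \<rho>" for a
    proof -
      have "dist a 0 < d" using that d \<rho>_def by auto
      then have "norm (f a 0) < norm c * r / 2" using d(2) f00 by (simp add: dist_norm)
      then show ?thesis using c by (simp add: T_def norm_divide field_simps)
    qed
  qed (use that in blast)
  have "(\<lambda>a. T a (h a)) holomorphic_on UNIV" if "h holomorphic_on UNIV" for h
    unfolding T_def using hol[OF that] that c by (intro holomorphic_intros)
  then have "picard_iter T n holomorphic_on UNIV" for n by (rule holomorphic_on_picard_iter)
  then have "\<forall>n. continuous_on (cball 0 \<rho>) (picard_iter T n) \<and> picard_iter T n holomorphic_on ball 0 \<rho>"
    by (auto intro: holomorphic_on_subset holomorphic_on_imp_continuous_on)
  then have g_hol: "g holomorphic_on ball 0 \<rho>"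
    by (rule holomorphic_uniform_limit[OF always_eventually g]) auto
  have g0: "g 0 = 0" using g_unique[of 0 0] f00 \<rho> r by (simp add: T_def)
  show ?thesis
  proof (rule that[OF r \<rho>(1) g_hol _ g0])
    show "f a (g a) = 0 \<and> norm (g a) \<le> r" if "a \<in> cball 0 \<rho>" for a
      using g_fixed[OF that] c by (simp add: T_def)
    show "b = g a" if "a \<in> cball 0 \<rho>" "norm b \<le> r" "f a b = 0" for a b
      using g_unique[OF that(1,2)] that(3) by (simp add: T_def)
  qed
qed

section \<open>Local charts of a smooth plane curve\<close>

definition chart :: "cvec \<Rightarrow> cvec \<Rightarrow> cvec \<Rightarrow> complex \<Rightarrow> complex \<Rightarrow> cvec" where
  "chart p u w a b =
     (c1 p + a * c1 u + b * c1 w, c2 p + a * c2 u + b * c2 w, c3 p + a * c3 u + b * c3 w)"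

lemma chart_components:
  "c1 (chart p u w a b) = c1 p + a * c1 u + b * c1 w"
  "c2 (chart p u w a b) = c2 p + a * c2 u + b * c2 w"
  "c3 (chart p u w a b) = c3 p + a * c3 u + b * c3 w"
  by (simp_all add: chart_def)

lemma chart_0_0 [simp]: "chart p u w 0 0 = p"
  by (simp add: chart_def)

lemma det3_chart_left: "det3 (chart p u w a b) u w = det3 p u w"
  by (simp add: det3_def dot_def cross_def chart_def algebra_simps)

lemma det3_chart_middle: "det3 p (chart p u w a b) w = a * det3 p u w"
  by (simp add: det3_def dot_def cross_def chart_def algebra_simps)

lemma chart_neq_zvec: "det3 p u w \<noteq> 0 \<Longrightarrow> chart p u w a b \<noteq> zvec"
  using det3_chart_left[of p u w a b] by (auto simp: det3_def dot_def zvec_def)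

lemma chart_eq_smul_chart_imp_eq:
  assumes D: "det3 p u w \<noteq> 0" and e: "chart p u w a b = smul c (chart p u w a' b')"
  shows "a = a'"
proof -
  have "det3 p u w = c * det3 p u w"
    using arg_cong[OF e, of "\<lambda>x. det3 x u w"] by (simp add: det3_chart_left det3_smul_left)
  then have "c = 1" using D by simp
  moreover have "a * det3 p u w = c * (a' * det3 p u w)"
    using arg_cong[OF e, of "\<lambda>x. det3 p x w"] by (simp add: det3_chart_middle det3_smul_middle)
  ultimately show ?thesis using D by simp
qed

text \<open>Cramer's rule: every point off the line through \<open>u\<close> and \<open>w\<close> lies in the chart.\<close>

lemma eq_smul_chart:
  assumes y: "det3 y u w \<noteq> 0" and p: "det3 p u w \<noteq> 0"
  shows "y = smul (det3 y u w / det3 p u w)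
                  (chart p u w (det3 p y w / det3 y u w) (det3 p u y / det3 y u w))"
proof -
  have solve: "x = M / D * (a + N / M * b + K / M * c)"
    if "D * x = M * a + N * b + K * c" "D \<noteq> 0" "M \<noteq> 0" for D M N K x a b c :: complex
  proof -
    have x: "x = (M * a + N * b + K * c) / D" using that(1,2) by (simp add: field_simps)
    show ?thesis using that(2,3) unfolding x by (simp add: field_simps)
  qed
  show ?thesis
    unfolding smul_def chart_def cvec_components
    using solve[OF cramer_rule(1)[of p u w y] p y] solve[OF cramer_rule(2)[of p u w y] p y]
      solve[OF cramer_rule(3)[of p u w y] p y]
    by (metis cvec_eta)
qed

lemma tangent_frame_exists:
  assumes sm: "smooth_curve d F" and d: "d \<ge> 1" and p: "p \<noteq> zvec" "feval d F p = 0"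
  obtains u w where "dot (grad d F p) u = 0" "dot (grad d F p) w \<noteq> 0" "det3 p u w \<noteq> 0"
proof -
  define G where "G = grad d F p"
  have G: "G \<noteq> zvec" using smooth_curve_grad_neq_zvec[OF sm p] by (simp add: G_def)
  have Gp: "dot G p = 0" using euler_identity[OF d, of F p] p by (simp add: G_def)
  obtain k where k: "cvec_comp k G \<noteq> 0" using cvec_comp_nonzero[OF G] by blast
  obtain j where j: "cvec_comp j p \<noteq> 0" using cvec_comp_nonzero[OF p(1)] by blast
  define u where "u = cross G (unit_cvec j)"
  define w where "w = unit_cvec k"
  have "cross p u = lincomb (cvec_comp j p) G (- dot p G) (unit_cvec j)"
    by (simp add: u_def cross_cross_right dot_unit_cvec)
  then have "det3 p u w = cvec_comp j p * cvec_comp k G"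
    using Gp by (simp add: det3_as_dot(3) dot_lincomb_right dot_commute[of p G] w_def
        dot_commute[of "unit_cvec k"] dot_unit_cvec)
  then have "det3 p u w \<noteq> 0" using j k by simp
  moreover have "dot G u = 0" by (simp add: u_def dot_cross_left)
  moreover have "dot G w \<noteq> 0" using k by (simp add: w_def dot_unit_cvec)
  ultimately show ?thesis using that by (simp add: G_def)
qed

lemma has_field_derivative_feval_chart:
  assumes "d \<ge> 1" "(A has_field_derivative A') (at t within S)" "(B has_field_derivative B') (at t within S)"
  shows "((\<lambda>t. feval d F (chart p u w (A t) (B t))) has_field_derivative
            dot (grad d F (chart p u w (A t) (B t))) (lincomb A' u B' w)) (at t within S)"
proof -
  have "((\<lambda>t. feval d F (c1 p + A t * c1 u + B t * c1 w, c2 p + A t * c2 u + B t * c2 w,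
            c3 p + A t * c3 u + B t * c3 w)) has_field_derivative
        dot (grad d F (c1 p + A t * c1 u + B t * c1 w, c2 p + A t * c2 u + B t * c2 w,
            c3 p + A t * c3 u + B t * c3 w))
          (A' * c1 u + B' * c1 w, A' * c2 u + B' * c2 w, A' * c3 u + B' * c3 w)) (at t within S)"
    by (rule has_field_derivative_feval[OF assms(1)]) (auto intro!: derivative_eq_intros assms(2,3))
  then show ?thesis by (simp add: chart_def lincomb_def)
qed

lemma curve_local_graph:
  assumes d: "d \<ge> 1" and p: "feval d F p = 0" and w: "dot (grad d F p) w \<noteq> 0"
  obtains r \<rho> g where "r > 0" "\<rho> > 0" "g holomorphic_on ball 0 \<rho>"
    "\<And>a. a \<in> cball 0 \<rho> \<Longrightarrow> feval d F (chart p u w a (g a)) = 0 \<and> norm (g a) \<le> r" "g 0 = 0"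
    "\<And>a b. a \<in> cball 0 \<rho> \<Longrightarrow> norm b \<le> r \<Longrightarrow> feval d F (chart p u w a b) = 0 \<Longrightarrow> b = g a"
proof (rule holomorphic_implicit_function[of "\<lambda>a b. feval d F (chart p u w a b)"
      "\<lambda>a b. dot (grad d F (chart p u w a b)) w"])
  show "((\<lambda>b. feval d F (chart p u w a b)) has_field_derivative
          dot (grad d F (chart p u w a b)) w) (at b)" for a b
    using has_field_derivative_feval_chart[OF d, of "\<lambda>_. a" 0 b UNIV "\<lambda>b. b" 1 F p u w]
    by (simp add: lincomb_def)
  show "continuous_on UNIV (\<lambda>z. dot (grad d F (chart p u w (fst z) (snd z))) w)"
    unfolding grad_def dot_def chart_def cvec_components by (intro continuous_intros)
  show "(\<lambda>a. feval d F (chart p u w a (h a))) holomorphic_on UNIV" if "h holomorphic_on UNIV" for h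
    unfolding chart_def by (intro holomorphic_intros that)
qed (use d p w that in auto)

text \<open>\<open>curve_chart d F p u w r \<rho> g\<close>: near \<open>p\<close>, the curve is the graph
  \<open>a \<mapsto> chart p u w a (g a)\<close> over the tangent direction \<open>u\<close>, with \<open>g\<close> the unique solution of
  size at most \<open>r\<close>; \<open>w\<close> is a transversal direction.\<close>

definition curve_chart ::
  "nat \<Rightarrow> form \<Rightarrow> cvec \<Rightarrow> cvec \<Rightarrow> cvec \<Rightarrow> real \<Rightarrow> real \<Rightarrow> (complex \<Rightarrow> complex) \<Rightarrow> bool" where
  "curve_chart d F p u w r \<rho> g \<longleftrightarrow> smooth_curve d F \<and> d \<ge> 1 \<and> p \<noteq> zvec \<and> feval d F p = 0 \<and>
     dot (grad d F p) u = 0 \<and> dot (grad d F p) w \<noteq> 0 \<and> det3 p u w \<noteq> 0 \<and> r > 0 \<and> \<rho> > 0 \<and>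
     g holomorphic_on ball 0 \<rho> \<and> g 0 = 0 \<and>
     (\<forall>a\<in>cball 0 \<rho>. feval d F (chart p u w a (g a)) = 0 \<and> norm (g a) \<le> r) \<and>
     (\<forall>a b. a \<in> cball 0 \<rho> \<longrightarrow> norm b \<le> r \<longrightarrow> feval d F (chart p u w a b) = 0 \<longrightarrow> b = g a)"

lemma curve_chart_exists:
  assumes sm: "smooth_curve d F" and d: "d \<ge> 1" and p: "p \<noteq> zvec" "feval d F p = 0"
  shows "\<exists>u w r \<rho> g. curve_chart d F p u w r \<rho> g"
proof -
  obtain u w where uw: "dot (grad d F p) u = 0" "dot (grad d F p) w \<noteq> 0" "det3 p u w \<noteq> 0"
    using tangent_frame_exists[OF sm d p] by blast
  obtain r \<rho> g where "r > 0" "\<rho> > 0" "g holomorphic_on ball 0 \<rho>"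
    "\<And>a. a \<in> cball 0 \<rho> \<Longrightarrow> feval d F (chart p u w a (g a)) = 0 \<and> norm (g a) \<le> r" "g 0 = 0"
    "\<And>a b. a \<in> cball 0 \<rho> \<Longrightarrow> norm b \<le> r \<Longrightarrow> feval d F (chart p u w a b) = 0 \<Longrightarrow> b = g a"
    using curve_local_graph[OF d p(2) uw(2), of u] by metis
  then have "curve_chart d F p u w r \<rho> g" using sm d p uw by (simp add: curve_chart_def)
  then show ?thesis by blast
qed

lemma holomorphic_on_feval_chart:
  assumes "curve_chart d F p u w r \<rho> g"
  shows "(\<lambda>t. feval e G (chart p u w t (g t))) holomorphic_on ball 0 \<rho>"
proof -
  have "g holomorphic_on ball 0 \<rho>" using assms by (simp add: curve_chart_def)
  then have "(\<lambda>t. feval e G (c1 (chart p u w t (g t)), c2 (chart p u w t (g t)), c3 (chart p u w t (g t))))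
        holomorphic_on ball 0 \<rho>"
    unfolding chart_components by (intro holomorphic_intros)
  then show ?thesis by simp
qed

lemma analytic_on_feval_chart:
  assumes "curve_chart d F p u w r \<rho> g"
  shows "(\<lambda>t. feval e G (chart p u w t (g t))) analytic_on {0}"
  using assms by (intro holomorphic_on_imp_analytic_at[OF holomorphic_on_feval_chart[OF assms]])
    (auto simp: curve_chart_def)

lemma analytic_on_dot_chart:
  assumes "curve_chart d F p u w r \<rho> g"
  shows "(\<lambda>t. dot l (chart p u w t (g t))) analytic_on {0}"
  using analytic_on_feval_chart[OF assms, of 1 "linear_form l"] unfolding feval_linear_form .

definition velocity :: "(complex \<Rightarrow> cvec) \<Rightarrow> cvec" where
  "velocity \<gamma> = (deriv (\<lambda>t. c1 (\<gamma> t)) 0, deriv (\<lambda>t. c2 (\<gamma> t)) 0, deriv (\<lambda>t. c3 (\<gamma> t)) 0)"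

lemma velocity_chart:
  assumes "curve_chart d F p u w r \<rho> g"
  shows "velocity (\<lambda>t. chart p u w t (g t)) = lincomb 1 u (deriv g 0) w"
proof -
  have "(g has_field_derivative deriv g 0) (at 0)"
    using assms holomorphic_derivI[of g "ball 0 \<rho>" 0] by (simp add: curve_chart_def)
  then have "((\<lambda>t. c1 p + t * c1 u + g t * c1 w) has_field_derivative c1 u + deriv g 0 * c1 w) (at 0)"
    "((\<lambda>t. c2 p + t * c2 u + g t * c2 w) has_field_derivative c2 u + deriv g 0 * c2 w) (at 0)"
    "((\<lambda>t. c3 p + t * c3 u + g t * c3 w) has_field_derivative c3 u + deriv g 0 * c3 w) (at 0)"
    by (auto intro!: derivative_eq_intros)
  then show ?thesis
    unfolding velocity_def chart_components by (simp add: DERIV_imp_deriv lincomb_def)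
qed

lemma curve_chart_tangent:
  assumes cc: "curve_chart d F p u w r \<rho> g"
  shows "dot (grad d F p) (lincomb 1 u (deriv g 0) w) = 0"
    and "cross p (lincomb 1 u (deriv g 0) w) \<noteq> zvec"
proof -
  from cc have d: "d \<ge> 1" and \<rho>: "\<rho> > 0" and g0: "g 0 = 0" and D: "det3 p u w \<noteq> 0"
    and g: "g holomorphic_on ball 0 \<rho>"
    and on_curve: "\<And>a. a \<in> cball 0 \<rho> \<Longrightarrow> feval d F (chart p u w a (g a)) = 0"
    by (auto simp: curve_chart_def)
  have "(g has_field_derivative deriv g 0) (at 0)" using holomorphic_derivI[OF g] \<rho> by simp
  then have "((\<lambda>t. feval d F (chart p u w t (g t))) has_field_derivative
      dot (grad d F (chart p u w 0 (g 0))) (lincomb 1 u (deriv g 0) w)) (at 0)"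
    by (rule has_field_derivative_feval_chart[OF d DERIV_ident])
  moreover have "((\<lambda>t. feval d F (chart p u w t (g t))) has_field_derivative 0) (at 0)"
    by (rule has_field_derivative_transform_within_open[OF DERIV_const, of "ball 0 \<rho>"])
       (use \<rho> on_curve in auto)
  ultimately show "dot (grad d F p) (lincomb 1 u (deriv g 0) w) = 0"
    using DERIV_unique g0 by fastforce
  have "dot w (cross p (lincomb 1 u (deriv g 0) w)) = det3 p u w"
    by (simp add: det3_def dot_def cross_def lincomb_def algebra_simps)
  then show "cross p (lincomb 1 u (deriv g 0) w) \<noteq> zvec" using D by (auto simp: dot_def zvec_def)
qed

lemma curve_chart_local_param:
  assumes cc: "curve_chart d F p u w r \<rho> g"
  shows "local_param d F p (\<lambda>t. chart p u w t (g t))"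
proof -
  from cc have \<rho>: "\<rho> > 0" and g: "g holomorphic_on ball 0 \<rho>" and g0: "g 0 = 0"
    and D: "det3 p u w \<noteq> 0"
    and on_curve: "\<And>a. a \<in> cball 0 \<rho> \<Longrightarrow> feval d F (chart p u w a (g a)) = 0"
    by (auto simp: curve_chart_def)
  have "cross p (velocity (\<lambda>t. chart p u w t (g t))) \<noteq> zvec"
    using curve_chart_tangent(2)[OF cc] velocity_chart[OF cc] by simp
  then show ?thesis unfolding local_param_def velocity_def chart_components
    using \<rho> g g0 chart_neq_zvec[OF D] on_curve
    by (intro exI[of _ \<rho>] conjI ballI holomorphic_intros) (auto simp: chart_def)
qed

lemma local_param_velocity_orthogonal:
  assumes d: "d \<ge> 1" and lp: "local_param d F p \<gamma>"
  shows "dot (grad d F p) (velocity \<gamma>) = 0"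
proof -
  obtain r where r: "r > 0" and hol: "(\<lambda>t. c1 (\<gamma> t)) holomorphic_on ball 0 r"
      "(\<lambda>t. c2 (\<gamma> t)) holomorphic_on ball 0 r" "(\<lambda>t. c3 (\<gamma> t)) holomorphic_on ball 0 r"
    and \<gamma>0: "\<gamma> 0 = p" and on_curve: "\<And>t. t \<in> ball 0 r \<Longrightarrow> feval d F (\<gamma> t) = 0"
    using lp unfolding local_param_def by blast
  have "((\<lambda>t. feval d F (c1 (\<gamma> t), c2 (\<gamma> t), c3 (\<gamma> t))) has_field_derivative
      dot (grad d F (c1 (\<gamma> 0), c2 (\<gamma> 0), c3 (\<gamma> 0))) (velocity \<gamma>)) (at 0)"
    unfolding velocity_def using r
    by (intro has_field_derivative_feval[OF d] holomorphic_derivI[OF hol(1) open_ball]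
        holomorphic_derivI[OF hol(2) open_ball] holomorphic_derivI[OF hol(3) open_ball]) auto
  moreover have "((\<lambda>t. feval d F (c1 (\<gamma> t), c2 (\<gamma> t), c3 (\<gamma> t))) has_field_derivative 0) (at 0)"
    by (rule has_field_derivative_transform_within_open[OF DERIV_const, of "ball 0 r"])
       (use r on_curve in auto)
  ultimately show ?thesis using \<gamma>0 DERIV_unique by fastforce
qed

lemma det3_neq_0_if_transversal:
  assumes Gp: "dot G p = 0" and Gu: "dot G u = 0" and Gw: "dot G w \<noteq> 0" and Gy: "dot G y = 0"
    and D: "det3 p u w \<noteq> 0" and py: "cross p y \<noteq> zvec"
  shows "det3 p y w \<noteq> 0"
proof
  assume h: "det3 p y w = 0"
  have "dot G (smul (det3 p u w) y) =
      det3 y u w * dot G p + det3 p y w * dot G u + det3 p u y * dot G w"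
    using cramer_rule[of p u w y] by (simp add: dot_def smul_def algebra_simps)
  then have "det3 p u y * dot G w = 0" using Gp Gu Gy h by (simp add: dot_smul_right)
  then have "det3 p u y = 0" using Gw by simp
  then have "y = smul (det3 y u w / det3 p u w) p"
    using cramer_rule[of p u w y] h D by (cases y) (simp add: smul_def field_simps)
  then obtain c where "y = smul c p" by blast
  then have "cross p y = zvec" by (simp add: cross_smul_self)
  with py show False by simp
qed

lemma eventually_norm_less_nhds:
  fixes f :: "complex \<Rightarrow> complex"
  assumes "isCont f 0" "f 0 = 0" "\<epsilon> > 0"
  shows "\<forall>\<^sub>F t in nhds 0. norm (f t) < \<epsilon>"
proof -
  have "(f \<longlongrightarrow> f 0) (nhds 0)" using assms(1) by (simp add: isCont_def tendsto_at_iff_tendsto_nhds)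
  then have "(f \<longlongrightarrow> 0) (nhds 0)" using assms(2) by simp
  then have "((\<lambda>t. norm (f t)) \<longlongrightarrow> 0) (nhds 0)" by (rule tendsto_norm_zero)
  then show ?thesis using assms(3) by (rule order_tendstoD)
qed

lemma holomorphic_curve_dot:
  assumes r: "r > 0" and hol: "(\<lambda>t. c1 (\<gamma> t)) holomorphic_on ball 0 r"
      "(\<lambda>t. c2 (\<gamma> t)) holomorphic_on ball 0 r" "(\<lambda>t. c3 (\<gamma> t)) holomorphic_on ball 0 r"
  shows "(\<lambda>t. dot (\<gamma> t) v) holomorphic_on ball 0 r"
    and "isCont (\<lambda>t. dot (\<gamma> t) v) 0"
    and "((\<lambda>t. dot (\<gamma> t) v) has_field_derivative dot (velocity \<gamma>) v) (at 0)"
proof -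
  show hol_dot: "(\<lambda>t. dot (\<gamma> t) v) holomorphic_on ball 0 r"
    unfolding dot_def by (intro holomorphic_intros hol)
  show "isCont (\<lambda>t. dot (\<gamma> t) v) 0"
    using hol_dot r
    by (meson centre_in_ball continuous_on_eq_continuous_at holomorphic_on_imp_continuous_on open_ball)
  show "((\<lambda>t. dot (\<gamma> t) v) has_field_derivative dot (velocity \<gamma>) v) (at 0)"
    unfolding dot_def velocity_def cvec_components using r
    by (auto intro!: derivative_eq_intros holomorphic_derivI[OF hol(1) open_ball]
        holomorphic_derivI[OF hol(2) open_ball] holomorphic_derivI[OF hol(3) open_ball])
qed

lemma chart_coordinates_of_curve:
  assumes D: "det3 p u w \<noteq> 0" and r1: "r1 > 0" and \<gamma>0: "\<gamma> 0 = p"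
    and hol: "(\<lambda>t. c1 (\<gamma> t)) holomorphic_on ball 0 r1" "(\<lambda>t. c2 (\<gamma> t)) holomorphic_on ball 0 r1"
      "(\<lambda>t. c3 (\<gamma> t)) holomorphic_on ball 0 r1"
    and \<epsilon>: "\<epsilon>\<^sub>1 > 0" "\<epsilon>\<^sub>2 > 0"
  obtains r2 \<mu> \<alpha> \<beta> where "r2 > 0" "ball (0 :: complex) r2 \<subseteq> ball 0 r1"
    "\<mu> holomorphic_on ball 0 r2" "\<alpha> holomorphic_on ball 0 r2" "\<alpha> 0 = 0"
    "(\<alpha> has_field_derivative det3 p (velocity \<gamma>) w / det3 p u w) (at 0)"
    "\<And>t. t \<in> ball 0 r2 \<Longrightarrow> \<mu> t \<noteq> 0 \<and> norm (\<alpha> t) < \<epsilon>\<^sub>1 \<and> norm (\<beta> t) < \<epsilon>\<^sub>2 \<and>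
        \<gamma> t = smul (\<mu> t) (chart p u w (\<alpha> t) (\<beta> t))"
proof -
  define M where "M = (\<lambda>t. dot (\<gamma> t) (cross u w))"
  define N where "N = (\<lambda>t. dot (\<gamma> t) (cross w p))"
  define K where "K = (\<lambda>t. dot (\<gamma> t) (cross p u))"
  define \<alpha> where "\<alpha> = (\<lambda>t. N t / M t)"
  define \<beta> where "\<beta> = (\<lambda>t. K t / M t)"
  define \<mu> where "\<mu> = (\<lambda>t. M t / det3 p u w)"
  note dot_hol = holomorphic_curve_dot(1)[OF r1 hol]
    and dot_cont = holomorphic_curve_dot(2)[OF r1 hol]
    and dot_deriv = holomorphic_curve_dot(3)[OF r1 hol]
  have M0: "M 0 = det3 p u w" and N0: "N 0 = 0" and K0: "K 0 = 0"
    using \<gamma>0 by (simp_all add: M_def N_def K_def det3_repeated flip: det3_as_dot)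
  have "(M \<longlongrightarrow> M 0) (nhds 0)"
    using dot_cont[of "cross u w"] unfolding M_def isCont_def
    by (rule tendsto_at_iff_tendsto_nhds[THEN iffD1])
  then have "\<forall>\<^sub>F t in nhds 0. M t \<noteq> 0" using M0 D by (intro tendsto_imp_eventually_ne) auto
  moreover have "\<forall>\<^sub>F t in nhds 0. norm (\<alpha> t) < \<epsilon>\<^sub>1"
    using dot_cont M0 N0 D \<epsilon> unfolding \<alpha>_def M_def N_def
    by (intro eventually_norm_less_nhds continuous_intros) auto
  moreover have "\<forall>\<^sub>F t in nhds 0. norm (\<beta> t) < \<epsilon>\<^sub>2"
    using dot_cont M0 K0 D \<epsilon> unfolding \<beta>_def M_def K_def
    by (intro eventually_norm_less_nhds continuous_intros) auto
  moreover have "\<forall>\<^sub>F t in nhds 0. t \<in> ball 0 r1" using r1 by (intro eventually_nhds_in_open) auto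
  ultimately have "\<forall>\<^sub>F t in nhds 0. M t \<noteq> 0 \<and> norm (\<alpha> t) < \<epsilon>\<^sub>1 \<and> norm (\<beta> t) < \<epsilon>\<^sub>2 \<and> t \<in> ball 0 r1"
    by eventually_elim auto
  then obtain r2 where r2: "r2 > 0" and near: "\<And>t. t \<in> ball 0 r2 \<Longrightarrow>
      M t \<noteq> 0 \<and> norm (\<alpha> t) < \<epsilon>\<^sub>1 \<and> norm (\<beta> t) < \<epsilon>\<^sub>2 \<and> t \<in> ball 0 r1"
    unfolding eventually_nhds_metric by (auto simp: dist_commute ball_def)
  have sub: "ball (0 :: complex) r2 \<subseteq> ball 0 r1"
  proof
    fix t :: complex assume "t \<in> ball 0 r2"
    from near[OF this] show "t \<in> ball 0 r1" by (elim conjE)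
  qed
  show ?thesis
  proof (rule that[OF r2 sub])
    show "\<mu> holomorphic_on ball 0 r2" "\<alpha> holomorphic_on ball 0 r2"
      unfolding \<mu>_def \<alpha>_def M_def N_def using near D
      by (auto intro!: holomorphic_intros holomorphic_on_subset[OF dot_hol sub] simp: M_def)
    show "\<alpha> 0 = 0" by (simp add: \<alpha>_def N0)
    have "(\<alpha> has_field_derivative dot (velocity \<gamma>) (cross w p) / det3 p u w) (at 0)"
      unfolding \<alpha>_def using dot_deriv[of "cross u w"] dot_deriv[of "cross w p"] M0 N0 D
      by (auto intro!: derivative_eq_intros simp: M_def N_def power2_eq_square)
    then show "(\<alpha> has_field_derivative det3 p (velocity \<gamma>) w / det3 p u w) (at 0)"
      by (simp only: det3_as_dot(2))
    show "\<mu> t \<noteq> 0 \<and> norm (\<alpha> t) < \<epsilon>\<^sub>1 \<and> norm (\<beta> t) < \<epsilon>\<^sub>2 \<and>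
        \<gamma> t = smul (\<mu> t) (chart p u w (\<alpha> t) (\<beta> t))" if "t \<in> ball 0 r2" for t
    proof -
      have "M t = det3 (\<gamma> t) u w" "N t = det3 p (\<gamma> t) w" "K t = det3 p u (\<gamma> t)"
        unfolding M_def N_def K_def by (rule det3_as_dot[symmetric])+
      then show ?thesis using near[OF that] eq_smul_chart[of "\<gamma> t" u w p] D
        by (simp add: \<mu>_def \<alpha>_def \<beta>_def)
    qed
  qed
qed

text \<open>This is why the order of vanishing along a local parametrisation does not depend on the
  parametrisation.\<close>

lemma local_param_reparam:
  assumes cc: "curve_chart d F p u w r \<rho> g" and lp: "local_param d F p \<gamma>"
  obtains r2 \<mu> \<alpha> where "r2 > 0" "\<mu> holomorphic_on ball 0 r2" "\<alpha> holomorphic_on ball 0 r2"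
    "\<And>t. t \<in> ball 0 r2 \<Longrightarrow> \<mu> t \<noteq> 0 \<and> \<alpha> t \<in> ball 0 \<rho> \<and> \<gamma> t = smul (\<mu> t) (chart p u w (\<alpha> t) (g (\<alpha> t)))"
    "\<alpha> 0 = 0" "deriv \<alpha> 0 \<noteq> 0"
proof -
  from cc have d: "d \<ge> 1" and p: "feval d F p = 0" and D: "det3 p u w \<noteq> 0"
    and Gu: "dot (grad d F p) u = 0" and Gw: "dot (grad d F p) w \<noteq> 0" and r: "r > 0" and \<rho>: "\<rho> > 0"
    and uniq: "\<And>a b. a \<in> cball 0 \<rho> \<Longrightarrow> norm b \<le> r \<Longrightarrow> feval d F (chart p u w a b) = 0 \<Longrightarrow> b = g a"
    by (auto simp: curve_chart_def)
  from lp obtain r1 where r1: "r1 > 0" and hol: "(\<lambda>t. c1 (\<gamma> t)) holomorphic_on ball 0 r1"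
      "(\<lambda>t. c2 (\<gamma> t)) holomorphic_on ball 0 r1" "(\<lambda>t. c3 (\<gamma> t)) holomorphic_on ball 0 r1"
    and \<gamma>0: "\<gamma> 0 = p" and on_curve: "\<And>t. t \<in> ball 0 r1 \<Longrightarrow> \<gamma> t \<noteq> zvec \<and> feval d F (\<gamma> t) = 0"
    and vel: "cross p (velocity \<gamma>) \<noteq> zvec"
    unfolding local_param_def velocity_def by blast
  have Gp: "dot (grad d F p) p = 0" using euler_identity[OF d, of F p] p by simp
  have "det3 p (velocity \<gamma>) w \<noteq> 0"
    by (rule det3_neq_0_if_transversal[OF Gp Gu Gw local_param_velocity_orthogonal[OF d lp] D vel])
  show ?thesis
  proof (rule chart_coordinates_of_curve[OF D r1 \<gamma>0 hol \<rho> r])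
    fix r2 \<mu> \<alpha> \<beta>
    assume r2: "r2 > 0" and sub: "ball (0 :: complex) r2 \<subseteq> ball 0 r1" and \<mu>: "\<mu> holomorphic_on ball 0 r2"
      and \<alpha>: "\<alpha> holomorphic_on ball 0 r2" "\<alpha> 0 = 0"
      and \<alpha>': "(\<alpha> has_field_derivative det3 p (velocity \<gamma>) w / det3 p u w) (at 0)"
      and near: "\<And>t. t \<in> ball 0 r2 \<Longrightarrow> \<mu> t \<noteq> 0 \<and> norm (\<alpha> t) < \<rho> \<and> norm (\<beta> t) < r \<and>
          \<gamma> t = smul (\<mu> t) (chart p u w (\<alpha> t) (\<beta> t))"
    have \<beta>_eq: "\<beta> t = g (\<alpha> t)" if t: "t \<in> ball 0 r2" for t
    proof (rule uniq)
      show "\<alpha> t \<in> cball 0 \<rho>" "norm (\<beta> t) \<le> r" using near[OF t] by auto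
      have "t \<in> ball 0 r1" using sub t by blast
      then show "feval d F (chart p u w (\<alpha> t) (\<beta> t)) = 0"
        using near[OF t] on_curve[of t] by (auto simp: feval_smul)
    qed
    have \<alpha>'_neq_0: "deriv \<alpha> 0 \<noteq> 0"
      using DERIV_imp_deriv[OF \<alpha>'] \<open>det3 p (velocity \<gamma>) w \<noteq> 0\<close> D by simp
    show thesis
    proof (rule that[OF r2 \<mu> \<alpha>(1) _ \<alpha>(2) \<alpha>'_neq_0])
      fix t :: complex assume t: "t \<in> ball 0 r2"
      show "\<mu> t \<noteq> 0 \<and> \<alpha> t \<in> ball 0 \<rho> \<and> \<gamma> t = smul (\<mu> t) (chart p u w (\<alpha> t) (g (\<alpha> t)))"
        using near[OF t] \<beta>_eq[OF t] by simp
    qed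
  qed
qed

lemma filterlim_at_0_if_deriv_neq_0:
  fixes \<alpha> :: "complex \<Rightarrow> complex"
  assumes "(\<alpha> has_field_derivative \<alpha>') (at 0)" "\<alpha> 0 = 0" "\<alpha>' \<noteq> 0"
  shows "filterlim \<alpha> (at 0) (at 0)"
proof (rule filterlim_atI)
  show "(\<alpha> \<longlongrightarrow> 0) (at 0)" using DERIV_isCont[OF assms(1)] assms(2) by (simp add: isCont_def)
  have "((\<lambda>t. (\<alpha> t - \<alpha> 0) / (t - 0)) \<longlongrightarrow> \<alpha>') (at 0)"
    using assms(1) by (simp add: has_field_derivative_iff)
  then have "\<forall>\<^sub>F t in at 0. (\<alpha> t - \<alpha> 0) / (t - 0) \<noteq> 0" using assms(3) by (rule tendsto_imp_eventually_ne)
  then show "\<forall>\<^sub>F t in at 0. \<alpha> t \<noteq> 0" by (rule eventually_mono) (auto simp: assms(2))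
qed

lemma zorder_comp_simple_zero:
  fixes h \<alpha> :: "complex \<Rightarrow> complex"
  assumes h: "h analytic_on {0}" and h_ne: "\<forall>\<^sub>F t in at 0. h t \<noteq> 0"
    and \<alpha>: "\<alpha> analytic_on {0}" "\<alpha> 0 = 0" "deriv \<alpha> 0 \<noteq> 0"
  shows "zorder (\<lambda>t. h (\<alpha> t)) 0 = zorder h 0"
proof -
  have "(\<alpha> has_field_derivative deriv \<alpha> 0) (at 0)"
    using \<alpha>(1) by (simp add: DERIV_deriv_iff_field_differentiable analytic_on_imp_differentiable_at)
  then have "filterlim \<alpha> (at 0) (at 0)" using \<alpha>(2,3) by (rule filterlim_at_0_if_deriv_neq_0)
  then have \<alpha>_ne: "\<forall>\<^sub>F t in at 0. \<alpha> t \<noteq> \<alpha> 0" using \<alpha>(2) by (simp add: filterlim_at)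
  have "zorder (h \<circ> \<alpha>) 0 = zorder h (\<alpha> 0) * zorder (\<lambda>t. \<alpha> t - \<alpha> 0) 0"
    using h_ne \<alpha>_ne \<alpha>(1,2) isolated_singularity_at_analytic[OF h] not_essential_analytic[OF h]
    by (intro zorder_compose') auto
  moreover have "zorder \<alpha> 0 = 1" by (rule zorder_zero_eqI'[OF \<alpha>(1)]) (use \<alpha>(2,3) in auto)
  ultimately show ?thesis using \<alpha>(2) by (simp add: o_def)
qed

lemma zorder_mult_nonvanishing:
  fixes \<mu> f :: "complex \<Rightarrow> complex"
  assumes "\<mu> analytic_on {0}" "\<mu> 0 \<noteq> 0" "f analytic_on {0}" "\<forall>\<^sub>F t in at 0. f t \<noteq> 0"
  shows "zorder (\<lambda>t. \<mu> t * f t) 0 = zorder f 0"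
proof -
  have "\<forall>\<^sub>F t in at 0. \<mu> t \<noteq> 0"
    using assms(1,2) analytic_at_imp_isCont[OF assms(1)]
    by (intro tendsto_imp_eventually_ne) (auto simp: isCont_def)
  with assms(4) have "\<forall>\<^sub>F t in at 0. \<mu> t * f t \<noteq> 0" by eventually_elim simp
  then have "zorder (\<lambda>t. \<mu> t * f t) 0 = zorder \<mu> 0 + zorder f 0"
    by (rule zorder_times_analytic[OF assms(1,3)])
  then show ?thesis using zorder_eq_0I[OF assms(1,2)] by simp
qed

lemma zorder_local_param_eq_chart:
  assumes cc: "curve_chart d F p u w r \<rho> g" and lp: "local_param d F p \<gamma>"
    and ne: "\<forall>\<^sub>F t in at 0. feval e G (chart p u w t (g t)) \<noteq> 0"
  shows "zorder (\<lambda>t. feval e G (\<gamma> t)) 0 = zorder (\<lambda>t. feval e G (chart p u w t (g t))) 0"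
proof -
  define h where "h = (\<lambda>t. feval e G (chart p u w t (g t)))"
  obtain r2 \<mu> \<alpha> where r2: "r2 > 0" and \<mu>: "\<mu> holomorphic_on ball 0 r2"
    and \<alpha>: "\<alpha> holomorphic_on ball 0 r2" "\<alpha> 0 = 0" "deriv \<alpha> 0 \<noteq> 0"
    and reparam: "\<And>t. t \<in> ball 0 r2 \<Longrightarrow>
      \<mu> t \<noteq> 0 \<and> \<alpha> t \<in> ball 0 \<rho> \<and> \<gamma> t = smul (\<mu> t) (chart p u w (\<alpha> t) (g (\<alpha> t)))"
    using local_param_reparam[OF cc lp] by metis
  have \<rho>: "\<rho> > 0" using cc by (simp add: curve_chart_def)
  have "zorder (\<lambda>t. feval e G (\<gamma> t)) 0 = zorder (\<lambda>t. \<mu> t ^ e * h (\<alpha> t)) 0"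
  proof (rule zorder_cong)
    have "\<forall>\<^sub>F t in at 0. t \<in> ball 0 r2" using r2 by (intro eventually_at_in_open') auto
    then show "\<forall>\<^sub>F t in at 0. feval e G (\<gamma> t) = \<mu> t ^ e * h (\<alpha> t)"
      by eventually_elim (simp add: reparam h_def feval_smul)
  qed simp
  also have "\<dots> = zorder (\<lambda>t. h (\<alpha> t)) 0"
  proof (rule zorder_mult_nonvanishing)
    show "(\<lambda>t. \<mu> t ^ e) analytic_on {0}"
      using r2 by (intro holomorphic_on_imp_analytic_at[of _ "ball 0 r2"] holomorphic_intros \<mu>) auto
    have "\<alpha> ` ball 0 r2 \<subseteq> ball 0 \<rho>" using reparam by auto
    then have "(\<lambda>t. h (\<alpha> t)) holomorphic_on ball 0 r2"
      using holomorphic_on_compose_gen[OF \<alpha>(1) holomorphic_on_feval_chart[OF cc]]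
      by (simp add: o_def h_def)
    then show "(\<lambda>t. h (\<alpha> t)) analytic_on {0}"
      using r2 by (intro holomorphic_on_imp_analytic_at) auto
    show "\<mu> 0 ^ e \<noteq> 0" using reparam[of 0] r2 by simp
    have "(\<alpha> has_field_derivative deriv \<alpha> 0) (at 0)" using holomorphic_derivI[OF \<alpha>(1)] r2 by simp
    then have "filterlim \<alpha> (at 0) (at 0)" using \<alpha>(2,3) by (rule filterlim_at_0_if_deriv_neq_0)
    with ne show "\<forall>\<^sub>F t in at 0. h (\<alpha> t) \<noteq> 0" unfolding h_def by (rule eventually_compose_filterlim)
  qed
  also have "\<dots> = zorder h 0"
    using analytic_on_feval_chart[OF cc] ne \<alpha> r2
    by (intro zorder_comp_simple_zero) (auto simp: h_def intro: holomorphic_on_imp_analytic_at[OF \<alpha>(1)])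
  finally show ?thesis by (simp add: h_def)
qed

lemma curve_ord_eq_chart_zorder:
  assumes cc: "curve_chart d F p u w r \<rho> g"
    and ne: "\<forall>\<^sub>F t in at 0. feval e G (chart p u w t (g t)) \<noteq> 0"
  shows "curve_ord d F e G p = zorder (\<lambda>t. feval e G (chart p u w t (g t))) 0"
  unfolding curve_ord_def
proof (rule the_equality)
  show "\<forall>\<gamma>. local_param d F p \<gamma> \<longrightarrow>
      zorder (\<lambda>t. feval e G (\<gamma> t)) 0 = zorder (\<lambda>t. feval e G (chart p u w t (g t))) 0"
    using zorder_local_param_eq_chart[OF cc _ ne] by blast
  fix n assume "\<forall>\<gamma>. local_param d F p \<gamma> \<longrightarrow> zorder (\<lambda>t. feval e G (\<gamma> t)) 0 = n"
  then show "n = zorder (\<lambda>t. feval e G (chart p u w t (g t))) 0"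
    using curve_chart_local_param[OF cc] by auto
qed

section \<open>Orders of linear forms along a chart\<close>

lemma finite_chart_zeros_of_line:
  assumes cc: "curve_chart d F p u w r \<rho> g" and d: "d \<ge> 2" and l: "l \<noteq> zvec" and lp: "dot l p = 0"
  shows "finite {t \<in> ball 0 \<rho>. dot l (chart p u w t (g t)) = 0}" (is "finite ?S")
proof -
  from cc have sm: "smooth_curve d F" and p: "p \<noteq> zvec" "feval d F p = 0" and D: "det3 p u w \<noteq> 0"
    and on_curve: "\<And>a. a \<in> cball 0 \<rho> \<Longrightarrow> feval d F (chart p u w a (g a)) = 0"
    by (auto simp: curve_chart_def)
  obtain b where b: "line_poly d F p b \<noteq> 0"
    and param: "\<And>q. q \<noteq> zvec \<Longrightarrow> feval d F q = 0 \<Longrightarrow> dot l q = 0 \<Longrightarrow>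
       \<exists>a s. a \<noteq> 0 \<and> poly (line_poly d F p b) s = 0 \<and> q = smul a (lincomb 1 p s b)"
    using line_curve_param[OF sm d l p lp] by blast
  have "\<forall>t\<in>?S. \<exists>a s. a \<noteq> 0 \<and> poly (line_poly d F p b) s = 0 \<and>
      chart p u w t (g t) = smul a (lincomb 1 p s b)"
    using param chart_neq_zvec[OF D] on_curve by auto
  then obtain A \<sigma> where A\<sigma>: "\<And>t. t \<in> ?S \<Longrightarrow> A t \<noteq> 0 \<and> poly (line_poly d F p b) (\<sigma> t) = 0 \<and>
      chart p u w t (g t) = smul (A t) (lincomb 1 p (\<sigma> t) b)"
    by metis
  have "inj_on \<sigma> ?S"
  proof (rule inj_onI)
    fix t t' assume t: "t \<in> ?S" and t': "t' \<in> ?S" and "\<sigma> t = \<sigma> t'"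
    then have "chart p u w t (g t) = smul (A t / A t') (chart p u w t' (g t'))"
      using A\<sigma>[OF t] A\<sigma>[OF t'] by (simp add: smul_def)
    then show "t = t'" by (rule chart_eq_smul_chart_imp_eq[OF D])
  qed
  moreover have "\<sigma> ` ?S \<subseteq> {s. poly (line_poly d F p b) s = 0}" using A\<sigma> by blast
  then have "finite (\<sigma> ` ?S)" using poly_roots_finite[OF b] finite_subset by blast
  ultimately show ?thesis using finite_image_iff by blast
qed

lemma eventually_dot_chart_neq_0:
  assumes cc: "curve_chart d F p u w r \<rho> g" and d: "d \<ge> 2" and l: "l \<noteq> zvec"
  shows "\<forall>\<^sub>F t in at 0. dot l (chart p u w t (g t)) \<noteq> 0"
proof (cases "dot l p = 0")
  case True
  have \<rho>: "\<rho> > 0" using cc by (simp add: curve_chart_def)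
  have "\<forall>\<^sub>F t in at 0. t \<notin> {t \<in> ball 0 \<rho>. dot l (chart p u w t (g t)) = 0}"
    using finite_chart_zeros_of_line[OF cc d l True] islimpt_finite islimpt_iff_eventually by blast
  moreover have "\<forall>\<^sub>F t in at 0. t \<in> ball 0 \<rho>" using \<rho> by (intro eventually_at_in_open') auto
  ultimately show ?thesis by eventually_elim auto
next
  case False
  have "isCont (\<lambda>t. dot l (chart p u w t (g t))) 0"
    using analytic_on_dot_chart[OF cc] by (rule analytic_at_imp_isCont)
  moreover have "g 0 = 0" using cc by (simp add: curve_chart_def)
  ultimately have "((\<lambda>t. dot l (chart p u w t (g t))) \<longlongrightarrow> dot l p) (at 0)"
    by (simp add: isCont_def)
  then show ?thesis using False by (rule tendsto_imp_eventually_ne)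
qed

lemma zorder_dot_chart_off_point:
  assumes cc: "curve_chart d F p u w r \<rho> g" and "dot l p \<noteq> 0"
  shows "zorder (\<lambda>t. dot l (chart p u w t (g t))) 0 = 0"
proof (rule zorder_eq_0I[OF analytic_on_dot_chart[OF cc]])
  show "dot l (chart p u w 0 (g 0)) \<noteq> 0" using cc assms(2) by (simp add: curve_chart_def)
qed

lemma zorder_dot_chart_transversal:
  assumes cc: "curve_chart d F p u w r \<rho> g" and lp: "dot l p = 0"
    and transversal: "dot l (lincomb 1 u (deriv g 0) w) \<noteq> 0"
  shows "zorder (\<lambda>t. dot l (chart p u w t (g t))) 0 = 1"
proof (rule zorder_zero_eqI'[OF analytic_on_dot_chart[OF cc]])
  from cc have \<rho>: "\<rho> > 0" and g0: "g 0 = 0" and g: "g holomorphic_on ball 0 \<rho>"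
    by (auto simp: curve_chart_def)
  have "(g has_field_derivative deriv g 0) (at 0)" using holomorphic_derivI[OF g] \<rho> by simp
  then have "((\<lambda>t. dot l (chart p u w t (g t))) has_field_derivative
      dot l (lincomb 1 u (deriv g 0) w)) (at 0)"
    unfolding dot_def chart_components lincomb_def cvec_components
    by (auto intro!: derivative_eq_intros simp: algebra_simps)
  then have "deriv (\<lambda>t. dot l (chart p u w t (g t))) 0 = dot l (lincomb 1 u (deriv g 0) w)"
    by (rule DERIV_imp_deriv)
  then show "(deriv ^^ nat 1) (\<lambda>t. dot l (chart p u w t (g t))) 0 \<noteq> 0" using transversal by simp
  show "(deriv ^^ i) (\<lambda>t. dot l (chart p u w t (g t))) 0 = 0" if "i < nat 1" for i
    using that lp g0 by simp
qed simp

lemma curve_ord_xform: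
  assumes cc: "curve_chart d F p u w r \<rho> g" and d: "d \<ge> 2"
  shows "curve_ord d F 1 xform p = zorder (\<lambda>t. dot (1, 0, 0) (chart p u w t (g t))) 0"
proof -
  have x: "feval 1 xform v = dot (1, 0, 0) v" for v
    unfolding xform_eq_linear_form by (rule feval_linear_form)
  have "\<forall>\<^sub>F t in at 0. dot (1, 0, 0) (chart p u w t (g t)) \<noteq> 0"
    by (rule eventually_dot_chart_neq_0[OF cc d]) (simp add: zvec_def)
  then have "\<forall>\<^sub>F t in at 0. feval 1 xform (chart p u w t (g t)) \<noteq> 0" by (simp only: x)
  then show ?thesis using curve_ord_eq_chart_zorder[OF cc] by (simp only: x)
qed

lemma curve_ord_cubic_form:
  assumes cc: "curve_chart d F p u w r \<rho> g" and d: "d \<ge> 2"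
    and abc: "a \<noteq> zvec" "b \<noteq> zvec" "c \<noteq> zvec"
  shows "curve_ord d F 3 (cubic_form a b c) p =
    zorder (\<lambda>t. dot a (chart p u w t (g t))) 0 + zorder (\<lambda>t. dot b (chart p u w t (g t))) 0
      + zorder (\<lambda>t. dot c (chart p u w t (g t))) 0"
proof -
  define fa where "fa = (\<lambda>t. dot a (chart p u w t (g t)))"
  define fb where "fb = (\<lambda>t. dot b (chart p u w t (g t)))"
  define fc where "fc = (\<lambda>t. dot c (chart p u w t (g t)))"
  have ne: "\<forall>\<^sub>F t in at 0. fa t \<noteq> 0" "\<forall>\<^sub>F t in at 0. fb t \<noteq> 0" "\<forall>\<^sub>F t in at 0. fc t \<noteq> 0"
    unfolding fa_def fb_def fc_def by (rule eventually_dot_chart_neq_0[OF cc d abc(1)]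
        eventually_dot_chart_neq_0[OF cc d abc(2)] eventually_dot_chart_neq_0[OF cc d abc(3)])+
  have an: "fa analytic_on {0}" "fb analytic_on {0}" "fc analytic_on {0}"
    unfolding fa_def fb_def fc_def by (rule analytic_on_dot_chart[OF cc])+
  have "\<forall>\<^sub>F t in at 0. feval 3 (cubic_form a b c) (chart p u w t (g t)) \<noteq> 0"
    using ne by eventually_elim (simp add: feval_cubic_form fa_def fb_def fc_def)
  then have "curve_ord d F 3 (cubic_form a b c) p = zorder (\<lambda>t. fa t * fb t * fc t) 0"
    by (simp add: curve_ord_eq_chart_zorder[OF cc] feval_cubic_form fa_def fb_def fc_def)
  also have "\<dots> = zorder (\<lambda>t. fa t * fb t) 0 + zorder fc 0"
  proof (rule zorder_times_analytic[OF analytic_on_mult[OF an(1,2)] an(3)])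
    show "\<forall>\<^sub>F t in at 0. fa t * fb t * fc t \<noteq> 0" using ne by eventually_elim simp
  qed
  also have "zorder (\<lambda>t. fa t * fb t) 0 = zorder fa 0 + zorder fb 0"
  proof (rule zorder_times_analytic[OF an(1,2)])
    show "\<forall>\<^sub>F t in at 0. fa t * fb t \<noteq> 0" using ne(1,2) by eventually_elim simp
  qed
  finally show ?thesis by (simp add: fa_def fb_def fc_def)
qed

lemma exists_curve_point_off_lines:
  assumes sm: "smooth_curve d F" and d: "d \<ge> 2" and p: "p \<noteq> zvec" "feval d F p = 0"
    and ls: "finite ls" "zvec \<notin> ls"
  shows "\<exists>v. v \<noteq> zvec \<and> feval d F v = 0 \<and> (\<forall>l\<in>ls. dot l v \<noteq> 0)"
proof -
  have "\<exists>u w r \<rho> g. curve_chart d F p u w r \<rho> g" using curve_chart_exists[OF sm _ p] d by simp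
  then obtain u w r \<rho> g where cc: "curve_chart d F p u w r \<rho> g" by blast
  then have \<rho>: "\<rho> > 0" and D: "det3 p u w \<noteq> 0"
    and on_curve: "\<And>a. a \<in> cball 0 \<rho> \<Longrightarrow> feval d F (chart p u w a (g a)) = 0"
    by (auto simp: curve_chart_def)
  have "\<forall>l\<in>ls. \<forall>\<^sub>F t in at 0. dot l (chart p u w t (g t)) \<noteq> 0"
  proof
    fix l assume "l \<in> ls"
    then have "l \<noteq> zvec" using ls(2) by blast
    then show "\<forall>\<^sub>F t in at 0. dot l (chart p u w t (g t)) \<noteq> 0"
      by (rule eventually_dot_chart_neq_0[OF cc d])
  qed
  then have "\<forall>\<^sub>F t in at 0. \<forall>l\<in>ls. dot l (chart p u w t (g t)) \<noteq> 0"
    by (rule eventually_ball_finite[OF ls(1)])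
  moreover have "\<forall>\<^sub>F t in at 0. t \<in> ball 0 \<rho>" using \<rho> by (intro eventually_at_in_open') auto
  ultimately have "\<forall>\<^sub>F t in at 0. t \<in> ball 0 \<rho> \<and> (\<forall>l\<in>ls. dot l (chart p u w t (g t)) \<noteq> 0)"
    by eventually_elim (rule conjI)
  then obtain t where t: "t \<in> ball 0 \<rho>" and off: "\<forall>l\<in>ls. dot l (chart p u w t (g t)) \<noteq> 0"
    using eventually_happens'[OF at_neq_bot] by blast
  show ?thesis
  proof (intro exI conjI)
    show "chart p u w t (g t) \<noteq> zvec" by (rule chart_neq_zvec[OF D])
    show "feval d F (chart p u w t (g t)) = 0" using on_curve t by simp
  qed (rule off)
qed

section \<open>The heptagon and its residual points\<close>

lemma res_pairs_eq: "res_pairs = {(1, 3), (1, 4), (1, 5), (1, 6), (2, 4), (2, 5), (2, 6), (2, 7),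
  (3, 5), (3, 6), (3, 7), (4, 6), (4, 7), (5, 7)}"
proof (rule set_eqI)
  fix x :: "nat \<times> nat"
  obtain i j where x: "x = (i, j)" by (cases x)
  show "x \<in> res_pairs \<longleftrightarrow> x \<in> {(1, 3), (1, 4), (1, 5), (1, 6), (2, 4), (2, 5), (2, 6), (2, 7),
    (3, 5), (3, 6), (3, 7), (4, 6), (4, 7), (5, 7)}"
  proof
    assume "x \<in> res_pairs"
    then have h: "1 \<le> i" "i < j" "j \<le> 7" "j - i \<noteq> 1" "j - i \<noteq> 6" by (auto simp: res_pairs_def x)
    then have "i = 1 \<or> i = 2 \<or> i = 3 \<or> i = 4 \<or> i = 5 \<or> i = 6" by linarith
    moreover have "j = 2 \<or> j = 3 \<or> j = 4 \<or> j = 5 \<or> j = 6 \<or> j = 7" using h by linarith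
    ultimately show "x \<in> {(1, 3), (1, 4), (1, 5), (1, 6), (2, 4), (2, 5), (2, 6), (2, 7),
      (3, 5), (3, 6), (3, 7), (4, 6), (4, 7), (5, 7)}"
      using h unfolding x by (elim disjE) simp_all
  qed (auto simp: res_pairs_def x)
qed

lemma res_pairs_memD: "(i, j) \<in> res_pairs \<Longrightarrow> i \<in> {1..7} \<and> j \<in> {1..7} \<and> i < j"
  by (auto simp: res_pairs_def)

text \<open>The four lines not adjacent to \<open>L\<^sub>k\<close> are \<open>L\<^sub>k\<^sub>+\<^sub>2, \<dots>, L\<^sub>k\<^sub>+\<^sub>5\<close> (indices modulo 7 in \<open>{1..7}\<close>);
  they meet \<open>L\<^sub>k\<close> in the residual points on \<open>L\<^sub>k\<close>.\<close>

definition nonadjacent :: "nat \<Rightarrow> nat \<Rightarrow> nat" where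
  "nonadjacent k n = (k + 1 + n) mod 7 + 1"

lemma nonadjacent_in_res_pairs:
  assumes "k \<in> {1..7}" "n < 4"
  shows "nonadjacent k n \<in> {1..7}" "nonadjacent k n \<noteq> k"
    "(min k (nonadjacent k n), max k (nonadjacent k n)) \<in> res_pairs"
proof -
  have "k = 1 \<or> k = 2 \<or> k = 3 \<or> k = 4 \<or> k = 5 \<or> k = 6 \<or> k = 7" "n = 0 \<or> n = 1 \<or> n = 2 \<or> n = 3"
    using assms by auto
  then show "nonadjacent k n \<in> {1..7}" "nonadjacent k n \<noteq> k"
    "(min k (nonadjacent k n), max k (nonadjacent k n)) \<in> res_pairs"
    unfolding res_pairs_eq by (elim disjE; simp add: nonadjacent_def)+
qed

lemma nonadjacent_inj:
  assumes "k \<in> {1..7}" "n < 4" "m < 4" "nonadjacent k n = nonadjacent k m"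
  shows "n = m"
proof -
  have "k = 1 \<or> k = 2 \<or> k = 3 \<or> k = 4 \<or> k = 5 \<or> k = 6 \<or> k = 7"
    "n = 0 \<or> n = 1 \<or> n = 2 \<or> n = 3" "m = 0 \<or> m = 1 \<or> m = 2 \<or> m = 3"
    using assms(1-3) by auto
  then show ?thesis using assms(4) by (elim disjE; simp add: nonadjacent_def)
qed

text \<open>Below, \<open>z k\<close> stands for ``the point lies on \<open>L\<^sub>k\<close>''.\<close>

lemma subset_of_lines_cases:
  fixes z :: "nat \<Rightarrow> bool"
  assumes no_three: "\<And>i j k. i \<in> {1..7} \<Longrightarrow> j \<in> {1..7} \<Longrightarrow> k \<in> {1..7} \<Longrightarrow>
      i \<noteq> j \<Longrightarrow> j \<noteq> k \<Longrightarrow> i \<noteq> k \<Longrightarrow> \<not> (z i \<and> z j \<and> z k)"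
    and nonadj: "\<And>k. k \<in> {1..7} \<Longrightarrow> z k \<Longrightarrow> \<exists>n<4. z (nonadjacent k n)"
  shows "(\<forall>k\<in>{1..7}. \<not> z k) \<or> (\<exists>i j. (i, j) \<in> res_pairs \<and> (\<forall>k\<in>{1..7}. z k \<longleftrightarrow> k = i \<or> k = j))"
proof (cases "\<exists>k\<in>{1..7}. z k")
  case True
  then obtain k where k: "k \<in> {1..7}" "z k" by blast
  obtain n where n: "n < 4" "z (nonadjacent k n)" using nonadj[OF k] by blast
  define j where "j = nonadjacent k n"
  have j: "j \<in> {1..7}" "j \<noteq> k" "(min k j, max k j) \<in> res_pairs" "z j"
    using nonadjacent_in_res_pairs[OF k(1) n(1)] n by (simp_all add: j_def)
  have "z m \<longleftrightarrow> m = min k j \<or> m = max k j" if m: "m \<in> {1..7}" for m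
  proof
    assume zm: "z m"
    show "m = min k j \<or> m = max k j"
    proof (rule ccontr)
      assume "\<not> ?thesis"
      then have "m \<noteq> k" "m \<noteq> j" by (auto simp: min_def max_def split: if_splits)
      with no_three[OF k(1) j(1) m] k j zm show False by auto
    qed
  next
    assume "m = min k j \<or> m = max k j"
    then show "z m" using k j by (auto simp: min_def max_def)
  qed
  with j(3) show ?thesis by blast
qed auto

locale heptagon_quartic =
  fixes L :: "nat \<Rightarrow> cvec" and C :: form
  assumes heptagon: "heptagon L" and adjoint: "adjoint_quartic L C" and smooth: "smooth_curve 4 C"
begin

lemma L_neq_zvec: "k \<in> {1..7} \<Longrightarrow> L k \<noteq> zvec"
  using heptagon by (simp add: heptagon_def)

lemma cross_L_neq_zvec: "i \<in> {1..7} \<Longrightarrow> j \<in> {1..7} \<Longrightarrow> i \<noteq> j \<Longrightarrow> cross (L i) (L j) \<noteq> zvec"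
  using heptagon by (simp add: heptagon_def)

lemma det3_L_neq_0:
  "i \<in> {1..7} \<Longrightarrow> j \<in> {1..7} \<Longrightarrow> k \<in> {1..7} \<Longrightarrow> i \<noteq> j \<Longrightarrow> j \<noteq> k \<Longrightarrow> i \<noteq> k \<Longrightarrow>
    det3 (L i) (L j) (L k) \<noteq> 0"
  using heptagon by (simp add: heptagon_def)

lemma residual_point_on_curve: "(i, j) \<in> res_pairs \<Longrightarrow> feval 4 C (cross (L i) (L j)) = 0"
  using adjoint by (auto simp: adjoint_quartic_def pt_def)

lemma residual_point_on_curve':
  assumes "(min i j, max i j) \<in> res_pairs"
  shows "feval 4 C (cross (L i) (L j)) = 0"
proof (cases "i \<le> j")
  case True then show ?thesis using residual_point_on_curve[of i j] assms by (simp add: min_def max_def)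
next
  case False
  then have "feval 4 C (cross (L j) (L i)) = 0"
    using residual_point_on_curve[of j i] assms by (simp add: min_def max_def)
  then show ?thesis by (simp add: cross_commute[of "L i"] feval_smul)
qed

lemma no_point_on_three_lines:
  assumes "i \<in> {1..7}" "j \<in> {1..7}" "k \<in> {1..7}" "i \<noteq> j" "j \<noteq> k" "i \<noteq> k" "v \<noteq> zvec"
  shows "\<not> (dot (L i) v = 0 \<and> dot (L j) v = 0 \<and> dot (L k) v = 0)"
proof
  assume "dot (L i) v = 0 \<and> dot (L j) v = 0 \<and> dot (L k) v = 0"
  then have "det3 (L i) (L j) (L k) = 0"
    by (intro det3_eq_0_if_orthogonal[OF assms(7)]) (auto simp: dot_commute)
  with det3_L_neq_0[OF assms(1-6)] show False by simp
qed

definition residual_on_line :: "nat \<Rightarrow> nat \<Rightarrow> cvec" where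
  "residual_on_line k n = cross (L k) (L (nonadjacent k n))"

lemma residual_on_line:
  assumes k: "k \<in> {1..7}" and n: "n < 4"
  shows "residual_on_line k n \<noteq> zvec \<and> feval 4 C (residual_on_line k n) = 0 \<and>
    dot (L k) (residual_on_line k n) = 0"
proof -
  note nonadj = nonadjacent_in_res_pairs[OF k n]
  have "cross (L k) (L (nonadjacent k n)) \<noteq> zvec"
    using cross_L_neq_zvec[OF k nonadj(1)] nonadj(2) by simp
  moreover have "feval 4 C (cross (L k) (L (nonadjacent k n))) = 0"
    by (rule residual_point_on_curve'[OF nonadj(3)])
  ultimately show ?thesis by (simp add: residual_on_line_def dot_cross_left)
qed

lemma residual_on_line_distinct:
  assumes k: "k \<in> {1..7}" and "n < 4" "m < 4" "n \<noteq> m"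
  shows "cross (residual_on_line k n) (residual_on_line k m) \<noteq> zvec"
proof -
  have "nonadjacent k n \<noteq> nonadjacent k m" using nonadjacent_inj[OF k] assms(2-4) by blast
  then have "det3 (L k) (L (nonadjacent k n)) (L (nonadjacent k m)) \<noteq> 0"
    using nonadjacent_in_res_pairs[OF k assms(2)] nonadjacent_in_res_pairs[OF k assms(3)]
    by (intro det3_L_neq_0[OF k]) auto
  then show ?thesis
    using L_neq_zvec[OF k] by (simp add: residual_on_line_def cross_cross_common smul_eq_zvec_iff)
qed

lemma curve_point_on_line_on_nonadjacent_line:
  assumes k: "k \<in> {1..7}" and v: "v \<noteq> zvec" "feval 4 C v = 0" "dot (L k) v = 0"
  shows "\<exists>n<4. dot (L (nonadjacent k n)) v = 0"
proof -
  obtain n where n: "n < 4" "cross (residual_on_line k n) v = zvec"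
    using line_curve_points_exhaust[where q = "residual_on_line k", OF smooth _ L_neq_zvec[OF k]
        residual_on_line[OF k] residual_on_line_distinct[OF k] v] by auto
  then obtain c where "v = smul c (residual_on_line k n)"
    using cross_eq_zvec_imp_smul residual_on_line[OF k n(1)] by blast
  then have "dot (L (nonadjacent k n)) v = 0"
    by (simp add: dot_smul_right residual_on_line_def dot_cross_right)
  with n show ?thesis by blast
qed

lemma zorder_dot_L_chart:
  assumes k: "k \<in> {1..7}" and cc: "curve_chart 4 C v u w r \<rho> g"
  shows "zorder (\<lambda>t. dot (L k) (chart v u w t (g t))) 0 = of_bool (dot (L k) v = 0)"
proof (cases "dot (L k) v = 0")
  case True
  from cc have v: "v \<noteq> zvec" "feval 4 C v = 0" by (auto simp: curve_chart_def)
  have "dot (L k) (lincomb 1 u (deriv g 0) w) \<noteq> 0"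
    using line_curve_points_transversal[where q = "residual_on_line k", OF smooth _ L_neq_zvec[OF k]
        residual_on_line[OF k] residual_on_line_distinct[OF k] v True curve_chart_tangent[OF cc]]
    by simp
  then show ?thesis using zorder_dot_chart_transversal[OF cc True] True by simp
next
  case False
  then show ?thesis using zorder_dot_chart_off_point[OF cc False] by simp
qed

lemma pt_div_residual:
  assumes ij: "(i, j) \<in> res_pairs"
  shows "pt_div (pt L i j) v = of_bool (v \<noteq> zvec \<and> dot (L i) v = 0 \<and> dot (L j) v = 0)"
proof -
  have nz: "cross (L i) (L j) \<noteq> zvec" using res_pairs_memD[OF ij] by (intro cross_L_neq_zvec) auto
  have "proj_eq (cross (L i) (L j)) v \<longleftrightarrow> v \<noteq> zvec \<and> dot (L i) v = 0 \<and> dot (L j) v = 0"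
  proof
    assume "proj_eq (cross (L i) (L j)) v"
    then obtain c where "v = smul c (cross (L i) (L j))" "v \<noteq> zvec" unfolding proj_eq_def by blast
    then show "v \<noteq> zvec \<and> dot (L i) v = 0 \<and> dot (L j) v = 0"
      by (simp add: dot_smul_right dot_cross_left dot_cross_right)
  next
    assume h: "v \<noteq> zvec \<and> dot (L i) v = 0 \<and> dot (L j) v = 0"
    then obtain c where "v = smul c (cross (L i) (L j))"
      using orthogonal_to_both_imp_smul_cross[OF nz, of v] by (auto simp: dot_commute)
    with h nz show "proj_eq (cross (L i) (L j)) v" unfolding proj_eq_def by blast
  qed
  then show ?thesis by (simp add: pt_div_def pt_def)
qed

lemma pt_div_residual_off_curve:
  assumes ij: "(i, j) \<in> res_pairs" and v: "\<not> (v \<noteq> zvec \<and> feval 4 C v = 0)"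
  shows "pt_div (pt L i j) v = 0"
proof -
  have "\<not> (v \<noteq> zvec \<and> dot (L i) v = 0 \<and> dot (L j) v = 0)"
  proof
    assume h: "v \<noteq> zvec \<and> dot (L i) v = 0 \<and> dot (L j) v = 0"
    have nz: "cross (L i) (L j) \<noteq> zvec" using res_pairs_memD[OF ij] by (intro cross_L_neq_zvec) auto
    then obtain c where "v = smul c (cross (L i) (L j))"
      using orthogonal_to_both_imp_smul_cross[OF nz, of v] h by (auto simp: dot_commute)
    then have "feval 4 C v = 0" using residual_point_on_curve[OF ij] by (simp add: feval_smul)
    with h v show False by simp
  qed
  then show ?thesis by (simp add: pt_div_residual[OF ij])
qed

lemma lines_through_curve_point:
  assumes v: "v \<noteq> zvec" "feval 4 C v = 0"
  shows "(\<forall>k\<in>{1..7}. dot (L k) v \<noteq> 0) \<or>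
    (\<exists>i j. (i, j) \<in> res_pairs \<and> (\<forall>k\<in>{1..7}. dot (L k) v = 0 \<longleftrightarrow> k = i \<or> k = j))"
proof (rule subset_of_lines_cases)
  show "\<not> (dot (L i) v = 0 \<and> dot (L j) v = 0 \<and> dot (L k) v = 0)"
    if "i \<in> {1..7}" "j \<in> {1..7}" "k \<in> {1..7}" "i \<noteq> j" "j \<noteq> k" "i \<noteq> k" for i j k
    using no_point_on_three_lines[OF that v(1)] .
  show "\<exists>n<4. dot (L (nonadjacent k n)) v = 0" if "k \<in> {1..7}" "dot (L k) v = 0" for k
    using curve_point_on_line_on_nonadjacent_line[OF that(1) v that(2)] .
qed

lemma curve_chartE:
  assumes "v \<noteq> zvec" "feval 4 C v = 0"
  obtains u w r \<rho> g where "curve_chart 4 C v u w r \<rho> g"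
  using curve_chart_exists[OF smooth _ assms] by auto

lemma divC_cubic_form_lines:
  assumes v: "v \<noteq> zvec" "feval 4 C v = 0" and t: "r \<in> {1..7}" "s \<in> {1..7}" "t \<in> {1..7}"
  shows "divC 4 C 3 (cubic_form (L r) (L s) (L t)) v =
    of_bool (dot (L r) v = 0) + of_bool (dot (L s) v = 0) + of_bool (dot (L t) v = 0)"
proof -
  obtain u w r \<rho> g where cc: "curve_chart 4 C v u w r \<rho> g" using curve_chartE[OF v] .
  show ?thesis
    using v curve_ord_cubic_form[OF cc _ L_neq_zvec[OF t(1)] L_neq_zvec[OF t(2)] L_neq_zvec[OF t(3)]]
      zorder_dot_L_chart[OF t(1) cc] zorder_dot_L_chart[OF t(2) cc] zorder_dot_L_chart[OF t(3) cc]
    by (simp add: divC_def)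
qed

lemma divC_cubic_form_x: "divC 4 C 3 (cubic_form (1, 0, 0) (1, 0, 0) (1, 0, 0)) v = 3 * divC 4 C 1 xform v"
proof (cases "v \<noteq> zvec \<and> feval 4 C v = 0")
  case True
  then obtain u w r \<rho> g where cc: "curve_chart 4 C v u w r \<rho> g" using curve_chartE by blast
  have x: "(1, 0, 0) \<noteq> zvec" by (simp add: zvec_def)
  show ?thesis using True curve_ord_cubic_form[OF cc _ x x x] curve_ord_xform[OF cc] by (simp add: divC_def)
qed (auto simp: divC_def)

lemma eta_off_curve:
  assumes "\<not> (v \<noteq> zvec \<and> feval 4 C v = 0)"
  shows "eta L C v = 0"
proof -
  have "(\<Sum>(i, j)\<in>res_pairs. pt_div (pt L i j) v) = 0"
    using pt_div_residual_off_curve[OF _ assms] by (intro sum.neutral) auto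
  then show ?thesis using assms by (auto simp: eta_def divC_def)
qed

lemma residual_pt_divs_at_curve_point:
  assumes v: "v \<noteq> zvec" "feval 4 C v = 0"
  shows "(\<forall>k\<in>{1..7}. dot (L k) v \<noteq> 0) \<and> (\<forall>q\<in>res_pairs. pt_div (pt L (fst q) (snd q)) v = 0) \<or>
    (\<exists>i j. (i, j) \<in> res_pairs \<and> (\<forall>k\<in>{1..7}. dot (L k) v = 0 \<longleftrightarrow> k = i \<or> k = j) \<and>
       (\<forall>q\<in>res_pairs. pt_div (pt L (fst q) (snd q)) v = of_bool (q = (i, j))))"
proof -
  have pd: "pt_div (pt L (fst q) (snd q)) v = of_bool (dot (L (fst q)) v = 0 \<and> dot (L (snd q)) v = 0)"
    if "q \<in> res_pairs" for q
    using pt_div_residual[of "fst q" "snd q" v] that v by simp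
  from lines_through_curve_point[OF v] show ?thesis
  proof
    assume none: "\<forall>k\<in>{1..7}. dot (L k) v \<noteq> 0"
    have "pt_div (pt L (fst q) (snd q)) v = 0" if "q \<in> res_pairs" for q
      using pd[OF that] none res_pairs_memD[of "fst q" "snd q"] that by simp
    with none show ?thesis by blast
  next
    assume "\<exists>i j. (i, j) \<in> res_pairs \<and> (\<forall>k\<in>{1..7}. dot (L k) v = 0 \<longleftrightarrow> k = i \<or> k = j)"
    then obtain i j where ij: "(i, j) \<in> res_pairs"
      and on: "\<forall>k\<in>{1..7}. dot (L k) v = 0 \<longleftrightarrow> k = i \<or> k = j" by blast
    have "pt_div (pt L (fst q) (snd q)) v = of_bool (q = (i, j))" if q: "q \<in> res_pairs" for q
    proof -
      obtain q1 q2 where q12: "q = (q1, q2)" by (cases q)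
      have "q1 \<in> {1..7}" "q2 \<in> {1..7}" "q1 < q2" "i < j" using res_pairs_memD q ij q12 by auto
      then show ?thesis using pd[OF q] on by (auto simp: q12)
    qed
    with ij on show ?thesis by blast
  qed
qed

text \<open>\<open>lines_fit a b c e r s t\<close>: every residual point occurs in \<open>\<eta> + p\<^sub>a - p\<^sub>b - p\<^sub>c - p\<^sub>e + 3H\<close>
  with the multiplicity to which it lies on the lines \<open>L\<^sub>r\<close>, \<open>L\<^sub>s\<close>, \<open>L\<^sub>t\<close>.\<close>

definition lines_fit :: "nat \<times> nat \<Rightarrow> nat \<times> nat \<Rightarrow> nat \<times> nat \<Rightarrow> nat \<times> nat \<Rightarrow> nat \<Rightarrow> nat \<Rightarrow> nat \<Rightarrow> bool" where
  "lines_fit a b c e r s t \<longleftrightarrow> (\<forall>q\<in>res_pairs.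
     1 + of_bool (a = q) - of_bool (b = q) - of_bool (c = q) - of_bool (e = q) =
     (of_bool (r = fst q \<or> r = snd q) + of_bool (s = fst q \<or> s = snd q) + of_bool (t = fst q \<or> t = snd q)
       :: int))"

text \<open>Since each line cuts out exactly the residual points on it, \<open>L\<^sub>r L\<^sub>s L\<^sub>t / x\<^sup>3\<close> has divisor
  \<open>\<eta> + p\<^sub>a - p\<^sub>b - p\<^sub>c - p\<^sub>e\<close> whenever the lines fit.\<close>

lemma eta_divisor_identity:
  assumes abce: "a \<in> res_pairs" "b \<in> res_pairs" "c \<in> res_pairs" "e \<in> res_pairs"
    and t: "r \<in> {1..7}" "s \<in> {1..7}" "t \<in> {1..7}" and fit: "lines_fit a b c e r s t"
  shows "eta L C v + pt_div (pt L (fst a) (snd a)) v - pt_div (pt L (fst b) (snd b)) v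
      - (pt_div (pt L (fst c) (snd c)) v + pt_div (pt L (fst e) (snd e)) v)
    = divC 4 C 3 (cubic_form (L r) (L s) (L t)) v - divC 4 C 3 (cubic_form (1, 0, 0) (1, 0, 0) (1, 0, 0)) v"
proof (cases "v \<noteq> zvec \<and> feval 4 C v = 0")
  case False
  then show ?thesis using abce pt_div_residual_off_curve eta_off_curve[OF False]
    by (auto simp: divC_def)
next
  case True
  then have v: "v \<noteq> zvec" "feval 4 C v = 0" by auto
  have eta: "eta L C v = (\<Sum>q\<in>res_pairs. pt_div (pt L (fst q) (snd q)) v)
      - divC 4 C 3 (cubic_form (1, 0, 0) (1, 0, 0) (1, 0, 0)) v"
    by (simp add: eta_def case_prod_unfold divC_cubic_form_x)
  note lines = divC_cubic_form_lines[OF v t]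
  from residual_pt_divs_at_curve_point[OF v] show ?thesis
  proof
    assume "(\<forall>k\<in>{1..7}. dot (L k) v \<noteq> 0) \<and> (\<forall>q\<in>res_pairs. pt_div (pt L (fst q) (snd q)) v = 0)"
    then show ?thesis unfolding eta lines using t abce by simp
  next
    assume "\<exists>i j. (i, j) \<in> res_pairs \<and> (\<forall>k\<in>{1..7}. dot (L k) v = 0 \<longleftrightarrow> k = i \<or> k = j) \<and>
       (\<forall>q\<in>res_pairs. pt_div (pt L (fst q) (snd q)) v = of_bool (q = (i, j)))"
    then obtain i j where ij: "(i, j) \<in> res_pairs"
      and on: "\<forall>k\<in>{1..7}. dot (L k) v = 0 \<longleftrightarrow> k = i \<or> k = j"
      and pd: "\<forall>q\<in>res_pairs. pt_div (pt L (fst q) (snd q)) v = of_bool (q = (i, j))" by blast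
    have "(\<Sum>q\<in>res_pairs. pt_div (pt L (fst q) (snd q)) v) = (\<Sum>q\<in>res_pairs. of_bool (q = (i, j)))"
      using pd by (intro sum.cong) simp_all
    with ij have "(\<Sum>q\<in>res_pairs. pt_div (pt L (fst q) (snd q)) v) = 1"
      by (simp add: sum.delta res_pairs_eq)
    moreover have "dot (L k) v = 0 \<longleftrightarrow> k = i \<or> k = j" if "k \<in> {r, s, t}" for k
      using on t that by blast
    moreover have "pt_div (pt L (fst q) (snd q)) v = of_bool (q = (i, j))" if "q \<in> {a, b, c, e}" for q
      using pd abce that by blast
    moreover have "1 + of_bool (a = (i, j)) - of_bool (b = (i, j)) - of_bool (c = (i, j)) - of_bool (e = (i, j))
      = (of_bool (r = i \<or> r = j) + of_bool (s = i \<or> s = j) + of_bool (t = i \<or> t = j) :: int)"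
      using fit ij unfolding lines_fit_def by fastforce
    ultimately show ?thesis unfolding eta lines by simp
  qed
qed

lemma eta_rel_of_three_lines:
  assumes abce: "a \<in> res_pairs" "b \<in> res_pairs" "c \<in> res_pairs" "e \<in> res_pairs"
    and t: "r \<in> {1..7}" "s \<in> {1..7}" "t \<in> {1..7}" and fit: "lines_fit a b c e r s t"
  shows "eta_rel L C a b c e"
proof -
  define x :: cvec where "x = (1, 0, 0)"
  define G where "G = cubic_form (L r) (L s) (L t)"
  define H where "H = cubic_form x x x"
  have p13: "cross (L 1) (L 3) \<noteq> zvec" "feval 4 C (cross (L 1) (L 3)) = 0"
    using cross_L_neq_zvec[of 1 3] residual_point_on_curve[of 1 3] by (auto simp: res_pairs_eq)
  have "zvec \<notin> {L r, L s, L t, x}"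
    using L_neq_zvec[OF t(1)] L_neq_zvec[OF t(2)] L_neq_zvec[OF t(3)] by (auto simp: x_def zvec_def)
  then have "\<exists>v. v \<noteq> zvec \<and> feval 4 C v = 0 \<and> (\<forall>l\<in>{L r, L s, L t, x}. dot l v \<noteq> 0)"
    by (intro exists_curve_point_off_lines[OF smooth _ p13]) auto
  then obtain v0 where v0: "v0 \<noteq> zvec" "feval 4 C v0 = 0"
    and off: "\<forall>l\<in>{L r, L s, L t, x}. dot l v0 \<noteq> 0" by blast
  have "\<exists>v. v \<noteq> zvec \<and> feval 4 C v = 0 \<and> feval 3 G v \<noteq> 0"
    using v0 off by (intro exI[of _ v0]) (simp add: G_def feval_cubic_form)
  moreover have "\<exists>v. v \<noteq> zvec \<and> feval 4 C v = 0 \<and> feval 3 H v \<noteq> 0"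
    using v0 off by (intro exI[of _ v0]) (simp add: H_def feval_cubic_form)
  moreover have "hom_form 3 G" "hom_form 3 H" by (simp_all add: G_def H_def hom_form_cubic_form)
  moreover note eta_divisor_identity[OF abce t fit, folded x_def G_def H_def]
  ultimately show ?thesis unfolding eta_rel_def lin_equiv_def by blast
qed

end

theorem lemma3p1:
  fixes L :: "nat \<Rightarrow> cvec" and C :: form
  assumes "heptagon L" and "adjoint_quartic L C" and "smooth_curve 4 C"
  shows "eta_rel L C (1,3) (4,6) (4,7) (5,7) \<and> eta_rel L C (4,6) (1,3) (3,7) (2,7) \<and>
         eta_rel L C (4,6) (2,7) (3,7) (1,3) \<and> eta_rel L C (2,7) (4,6) (3,6) (3,5) \<and>
         eta_rel L C (2,7) (3,5) (3,6) (4,6) \<and> eta_rel L C (3,5) (2,7) (2,6) (1,6) \<and>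
         eta_rel L C (3,5) (1,6) (2,6) (2,7) \<and> eta_rel L C (1,6) (3,5) (2,5) (2,4) \<and>
         eta_rel L C (1,6) (2,4) (2,5) (3,5) \<and> eta_rel L C (2,4) (1,6) (1,5) (5,7) \<and>
         eta_rel L C (2,4) (5,7) (1,5) (1,6) \<and> eta_rel L C (5,7) (2,4) (1,4) (1,3) \<and>
         eta_rel L C (5,7) (1,3) (1,4) (2,4) \<and> eta_rel L C (1,3) (5,7) (4,7) (4,6)"
proof -
  interpret heptagon_quartic L C using assms by unfold_locales
  note rel = eta_rel_of_three_lines[unfolded res_pairs_eq lines_fit_def]
  have "eta_rel L C (1,3) (4,6) (4,7) (5,7)" "eta_rel L C (1,3) (5,7) (4,7) (4,6)"
    by (rule rel[where r = 1 and s = 2 and t = 3]; force)+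
  moreover have "eta_rel L C (4,6) (1,3) (3,7) (2,7)" "eta_rel L C (4,6) (2,7) (3,7) (1,3)"
    by (rule rel[where r = 4 and s = 5 and t = 6]; force)+
  moreover have "eta_rel L C (2,7) (4,6) (3,6) (3,5)" "eta_rel L C (2,7) (3,5) (3,6) (4,6)"
    by (rule rel[where r = 1 and s = 2 and t = 7]; force)+
  moreover have "eta_rel L C (3,5) (2,7) (2,6) (1,6)" "eta_rel L C (3,5) (1,6) (2,6) (2,7)"
    by (rule rel[where r = 3 and s = 4 and t = 5]; force)+
  moreover have "eta_rel L C (1,6) (3,5) (2,5) (2,4)" "eta_rel L C (1,6) (2,4) (2,5) (3,5)"
    by (rule rel[where r = 1 and s = 6 and t = 7]; force)+
  moreover have "eta_rel L C (2,4) (1,6) (1,5) (5,7)" "eta_rel L C (2,4) (5,7) (1,5) (1,6)"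
    by (rule rel[where r = 2 and s = 3 and t = 4]; force)+
  moreover have "eta_rel L C (5,7) (2,4) (1,4) (1,3)" "eta_rel L C (5,7) (1,3) (1,4) (2,4)"
    by (rule rel[where r = 5 and s = 6 and t = 7]; force)+
  ultimately show ?thesis by blast
qed

end
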